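(* Let $T>0$, let $\lambda^*$ be a conditional intensity of a temporal point process on $[0,T]$, and let $(\mathcal{T}_n)_{n\in\mathbb{N}}$ be a dissecting system of partitions of $(0,T]$, where $\mathcal{T}_n=\{(a_i^{(n)},b_i^{(n)}]:i=1,\dots,k_n\}$ consists of intervals. Let $P_0$ be the distribution of the unit rate Poisson point process on $[0,T]$ and, for a realization $\varphi=\{t_1<\dots<t_m\}$, define $$p_i^{(n)}=1-\exp\Big(-\int_{a_i^{(n)}}^{b_i^{(n)}}\lambda^*\big(t\mid t_j<a_i^{(n)}\big)\,dt\Big),\qquad i=1,\dots,k_n,\ n\in\mathbb{N}.$$ Then $$S_{\mathrm{int}}^{\mathcal{T}_n}\big(p_1^{(n)},\dots,p_{k_n}^{(n)},\varphi\big)+\sum_{i=1}^{k_n}\mathbf{1}\{\varphi((a_i^{(n)},b_i^{(n)}])>0\}\log\big(b_i^{(n)}-a_i^{(n)}\big)\longrightarrow S(\lambda^*,\varphi)$$ as $n\to\infty$ for $P_0$-a.e. $\varphi\in\mathbb{M}_0([0,T])$, where $S(\lambda^*,\{t_1,\dots,t_m\})=-\sum_{i=1}^m\log\lambda^*(t_i)+\int_0^T\lambda^*(u)\,du$.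
   Context: The conditional intensity $\lambda^*(t)=\lim_{\Delta t\to0}\mathbb{E}[\Phi((t,t+\Delta t))\mid\mathcal{H}_t]/\Delta t$ (history filtration $\mathcal{H}_t$), taken left-continuous; $\lambda^*(t\mid t_1,\dots,t_i)$ is its value at $t$ given past points $t_1<\dots<t_i\le t$, $\lambda^*(t\mid t_j<a)$ denotes the value computed from the points of $\varphi$ before $a$, and $\lambda^*(t_i)$ means $\lambda^*(t_i\mid t_1,\dots,t_{i-1})$. $\mathbb{M}_0([0,T])$ is the space of finite counting measures on $[0,T]$. For a partition $\mathcal{T}_n$ of $(0,T]$ into intervals $(a_i,b_i]$, $i=1,\dots,k_n$, the interval scoring function is $S_{\mathrm{int}}^{\mathcal{T}_n}(p_1,\dots,p_{k_n},\varphi)=\sum_{i=1}^{k_n}\big[-\mathbf{1}\{\varphi((a_i,b_i])>0\}\log p_i-\mathbf{1}\{\varphi((a_i,b_i])=0\}\log(1-p_i)\big]$. A sequence of partitions is dissecting if it is nested (each partition refines the previous) and asymptotically separates every pair of distinct points. *)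

theory Defs
  imports "HOL-Probability.Probability"
begin

text \<open>Configurations (realisations of a simple finite point process on [0,T]) are
  represented as finite sets of reals in [0,T].\<close>

definition config_space :: "real \<Rightarrow> real set measure" where
  "config_space T =
     sigma {\<phi>. finite \<phi> \<and> \<phi> \<subseteq> {0..T}}
       {{\<phi>. finite \<phi> \<and> \<phi> \<subseteq> {0..T} \<and> card (\<phi> \<inter> A) = j} | A j. A \<in> sets borel}"

definition poisson_P0 :: "real \<Rightarrow> real set measure" where
  "poisson_P0 T =
     distr (measure_pmf (poisson_pmf T) \<Otimes>\<^sub>M (\<Pi>\<^sub>M i\<in>(UNIV::nat set). uniform_measure lborel {0..T}))
       (config_space T) (\<lambda>(N, x). x ` {..<N})"

text \<open>Conditional intensity: lam t H is lambda*(t | t_1,...,t_i) where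
  H = [t_1,...,t_i] is the strictly increasing list of past points.\<close>

definition conditional_intensity :: "real \<Rightarrow> (real \<Rightarrow> real list \<Rightarrow> real) \<Rightarrow> bool" where
  "conditional_intensity T lam \<longleftrightarrow>
     (\<forall>t H. sorted_wrt (<) H \<longrightarrow> 0 \<le> lam t H) \<and>
     (\<forall>i. (\<lambda>(t, x::nat \<Rightarrow> real). if sorted_wrt (<) (map x [0..<i]) then lam t (map x [0..<i]) else 0)
            \<in> borel_measurable (lborel \<Otimes>\<^sub>M (\<Pi>\<^sub>M j\<in>{..<i}. lborel))) \<and>
     (\<forall>H. sorted_wrt (<) H \<and> set H \<subseteq> {0..T} \<longrightarrow> set_integrable lborel {0..T} (\<lambda>t. lam t H))"

definition hist :: "real set \<Rightarrow> real \<Rightarrow> real list" where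
  "hist \<phi> a = sorted_list_of_set {s \<in> \<phi>. s < a}"

definition nlog :: "real \<Rightarrow> ereal" where
  "nlog x = (if x \<le> 0 then \<infinity> else ereal (- ln x))"

definition interval_partition :: "real \<Rightarrow> nat \<Rightarrow> (nat \<Rightarrow> real) \<Rightarrow> (nat \<Rightarrow> real) \<Rightarrow> bool" where
  "interval_partition T k a b \<longleftrightarrow>
     (\<forall>i<k. a i < b i) \<and>
     (\<forall>i<k. \<forall>j<k. i \<noteq> j \<longrightarrow> {a i<..b i} \<inter> {a j<..b j} = {}) \<and>
     (\<Union>i<k. {a i<..b i}) = {0<..T}"

definition dissecting :: "real \<Rightarrow> (nat \<Rightarrow> nat) \<Rightarrow> (nat \<Rightarrow> nat \<Rightarrow> real) \<Rightarrow> (nat \<Rightarrow> nat \<Rightarrow> real) \<Rightarrow> bool" where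
  "dissecting T k a b \<longleftrightarrow>
     (\<forall>n. interval_partition T (k n) (a n) (b n)) \<and>
     (\<forall>n. \<forall>i<k (Suc n). \<exists>j<k n. {a (Suc n) i<..b (Suc n) i} \<subseteq> {a n j<..b n j}) \<and>
     (\<forall>x\<in>{0<..T}. \<forall>y\<in>{0<..T}. x \<noteq> y \<longrightarrow>
        (\<exists>n. \<forall>i<k n. \<not> (x \<in> {a n i<..b n i} \<and> y \<in> {a n i<..b n i})))"

definition S_int :: "nat \<Rightarrow> (nat \<Rightarrow> real) \<Rightarrow> (nat \<Rightarrow> real) \<Rightarrow> (nat \<Rightarrow> real) \<Rightarrow> real set \<Rightarrow> ereal" where
  "S_int k a b p \<phi> =
     (\<Sum>i<k. if card (\<phi> \<inter> {a i<..b i}) > 0 then nlog (p i) else nlog (1 - p i))"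

definition p_int :: "(real \<Rightarrow> real list \<Rightarrow> real) \<Rightarrow> real set \<Rightarrow> real \<Rightarrow> real \<Rightarrow> real" where
  "p_int lam \<phi> a b = 1 - exp (- (\<integral>t\<in>{a..b}. lam t (hist \<phi> a) \<partial>lborel))"

definition S_ll :: "real \<Rightarrow> (real \<Rightarrow> real list \<Rightarrow> real) \<Rightarrow> real set \<Rightarrow> ereal" where
  "S_ll T lam \<phi> =
     (\<Sum>t\<in>\<phi>. nlog (lam t (hist \<phi> t))) + ereal (\<integral>u\<in>{0..T}. lam u (hist \<phi> u) \<partial>lborel)"

end

theory Submission
  imports Defs
begin

text \<open>
  Fix a configuration \<open>\<phi>\<close>. Once the cells of level \<open>n\<close> separate the points of \<open>\<phi>\<close>, the score
  splits into one term per empty cell and one per point. On an empty cell the history is constant,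
  so \<open>-log (1 - p\<^sub>i)\<close> is exactly the integral of \<open>\<lambda>*\<close> over the cell; these integrals add up to
  \<open>\<integral>\<^sub>0\<^sup>T \<lambda>*\<close> minus the integrals over the occupied cells, which shrink to points. For a point \<open>t\<close>
  with compensator \<open>I\<close> on its cell \<open>C\<close>, the term is \<open>-log ((1 - exp (-I)) / |C|)\<close>, and
  \<open>(1 - exp (-I)) / |C|\<close> behaves like the average of \<open>\<lambda>*(\<cdot> | history of t)\<close> over \<open>C\<close>, which tends to
  \<open>\<lambda>*(t)\<close> for almost every \<open>t\<close>: integrals are differentiated almost everywhere along a
  dissecting system, by a Vitali-type covering argument with the nested cells.

  Under \<open>P\<^sub>0\<close> the points are independent and uniform, and the history of each point is made of
  the other points. By Fubini, almost surely every point is a differentiation point for its own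
  history and avoids the countably many cell endpoints.
\<close>

lemma emeasure_density_eq_set_integral:
  fixes F :: "'a \<Rightarrow> real"
  assumes "integrable M F" "\<And>x. 0 \<le> F x" "A \<in> sets M"
  shows "emeasure (density M (\<lambda>x. ennreal (F x))) A = ennreal (\<integral>x\<in>A. F x \<partial>M)"
  using assms by (simp add: emeasure_density nn_set_integral_eq_set_integral)

lemma emeasure_density_const_on:
  assumes "S \<in> sets M" "A \<in> sets M" "A \<subseteq> S"
  shows "emeasure (density M (\<lambda>x. c * indicator S x)) A = c * emeasure M A"
proof -
  have "emeasure (density M (\<lambda>x. c * indicator S x)) A = (\<integral>\<^sup>+x. c * indicator A x \<partial>M)"
    using assms by (auto simp: emeasure_density intro!: nn_integral_cong split: split_indicator)
  then show ?thesis
    using assms(2) by (simp add: nn_integral_cmult_indicator)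
qed

lemma null_sets_if_scaled_emeasure_le:
  assumes A: "A \<in> sets M" "emeasure M A \<noteq> \<infinity>"
    and le: "ennreal v * emeasure M A \<le> ennreal u * emeasure M A" and "0 \<le> u" "u < v"
  shows "A \<in> null_sets M"
proof -
  obtain m where m: "emeasure M A = ennreal m" "0 \<le> m"
    using A(2) by (cases "emeasure M A" rule: ennreal_cases) auto
  then have "ennreal (v * m) \<le> ennreal (u * m)"
    using le \<open>0 \<le> u\<close> \<open>u < v\<close> by (simp add: ennreal_mult)
  then have "v * m \<le> u * m"
    using \<open>0 \<le> u\<close> m(2) by (simp add: ennreal_le_iff)
  then have "(v - u) * m \<le> 0"
    by (simp add: left_diff_distrib)
  then have "m = 0"
    using \<open>u < v\<close> m(2) by (auto simp: mult_le_0_iff)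
  then show ?thesis
    using A(1) m(1) by (simp add: null_sets_def)
qed

lemma null_sets_PiM_if_AE_fun_upd:
  fixes M :: "'a measure" and i :: 'i
  assumes M: "prob_space M" and B: "B \<in> sets (\<Pi>\<^sub>M j\<in>UNIV. M)"
    and AE: "\<And>X. AE u in M. X(i := u) \<notin> B"
  shows "B \<in> null_sets (\<Pi>\<^sub>M j\<in>UNIV. M)"
proof -
  define PX where "PX = (\<Pi>\<^sub>M j\<in>UNIV - {i}. M)"
  interpret M: prob_space M
    by (rule M)
  interpret PX: prob_space PX
    unfolding PX_def by (intro prob_space_PiM M)
  interpret pair_sigma_finite M PX
    by unfold_locales
  define h where "h = (\<lambda>(u, X). X(i := u) :: 'i \<Rightarrow> 'a)"
  have "distr (M \<Otimes>\<^sub>M PX) (\<Pi>\<^sub>M j\<in>insert i (UNIV - {i}). M) h = (\<Pi>\<^sub>M j\<in>insert i (UNIV - {i}). M)"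
    unfolding PX_def h_def by (intro distr_pair_PiM_eq_PiM M)
  then have distr_h: "distr (M \<Otimes>\<^sub>M PX) (\<Pi>\<^sub>M j\<in>UNIV. M) h = (\<Pi>\<^sub>M j\<in>UNIV. M)"
    by (simp add: insert_absorb)
  have h: "h \<in> measurable (M \<Otimes>\<^sub>M PX) (\<Pi>\<^sub>M j\<in>UNIV. M)"
    unfolding h_def PX_def split_beta'
    by (rule measurable_fun_upd[where J = "UNIV - {i}"]) auto
  note [measurable] = h B
  have pred: "Measurable.pred (M \<Otimes>\<^sub>M PX) (\<lambda>p. h p \<notin> B)"
    by measurable
  have "AE X in PX. AE u in M. h (u, X) \<notin> B"
    using AE by (simp add: h_def)
  then have "AE u in M. AE X in PX. h (u, X) \<notin> B"
    using AE_commute[of "\<lambda>u X. h (u, X) \<notin> B"] pred by simp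
  then have "AE p in M \<Otimes>\<^sub>M PX. h p \<notin> B"
    using pred by (intro AE_pair_measure) (auto simp: pred_def)
  then have "AE x in \<Pi>\<^sub>M j\<in>UNIV. M. x \<notin> B"
    using B by (subst distr_h[symmetric], subst AE_distr_iff[OF h]) auto
  then show ?thesis
    using AE_iff_null_sets[OF B] by blast
qed

lemma not_tendsto_rational_gap:
  fixes X :: "nat \<Rightarrow> real"
  assumes "\<not> X \<longlonglongrightarrow> L" "0 \<le> L" and X: "\<And>n. 0 \<le> X n"
  obtains u v where "u \<in> \<rat>" "v \<in> \<rat>" "0 < u" "u < v"
    "L < u \<and> (\<exists>\<^sub>F n in sequentially. v < X n) \<or> v < L \<and> (\<exists>\<^sub>F n in sequentially. X n < u)"
proof -
  obtain e where e: "0 < e" "\<exists>\<^sub>F n in sequentially. \<not> dist (X n) L < e"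
    using assms(1) unfolding tendsto_iff by (auto simp: not_eventually)
  from e(2) have "\<exists>\<^sub>F n in sequentially. L + e \<le> X n \<or> X n \<le> L - e"
    by (rule frequently_elim1) (auto simp: dist_real_def)
  then consider "\<exists>\<^sub>F n in sequentially. L + e \<le> X n" | "\<exists>\<^sub>F n in sequentially. X n \<le> L - e"
    using frequently_disj_iff by blast
  then show ?thesis
  proof cases
    case 1
    obtain u where u: "u \<in> \<rat>" "L < u" "u < L + e"
      using Rats_dense_in_real[of L "L + e"] e(1) by auto
    obtain v where v: "v \<in> \<rat>" "u < v" "v < L + e"
      using Rats_dense_in_real[OF u(3)] by auto
    have "\<exists>\<^sub>F n in sequentially. v < X n"
      using 1 by (rule frequently_elim1) (use v in auto)
    then show ?thesis
      using that[of u v] u v \<open>0 \<le> L\<close> by auto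
  next
    case 2
    then obtain n where "X n \<le> L - e"
      using frequently_ex by blast
    then have "0 \<le> L - e"
      using X[of n] by linarith
    obtain u where u: "u \<in> \<rat>" "L - e < u" "u < L"
      using Rats_dense_in_real[of "L - e" L] e(1) by auto
    obtain v where v: "v \<in> \<rat>" "u < v" "v < L"
      using Rats_dense_in_real[OF u(3)] by auto
    have "\<exists>\<^sub>F n in sequentially. X n < u"
      using 2 by (rule frequently_elim1) (use u in auto)
    then show ?thesis
      using that[of u v] u v \<open>0 \<le> L - e\<close> by auto
  qed
qed

lemma nlog_divide: "0 < c \<Longrightarrow> nlog (x / c) = nlog x + ereal (ln c)"
  by (simp add: nlog_def divide_le_0_iff ln_div)

lemma tendsto_nlog:
  assumes f: "(f \<longlongrightarrow> L) F" and "0 \<le> L"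
  shows "((\<lambda>x. nlog (f x)) \<longlongrightarrow> nlog L) F"
proof (cases "L = 0")
  case True
  have "\<forall>\<^sub>F x in F. ereal r < nlog (f x)" for r
  proof -
    have "\<forall>\<^sub>F x in F. f x < exp (- r)"
      using order_tendstoD(2)[OF f] True by simp
    then show ?thesis
    proof eventually_elim
      case (elim x)
      then show ?case
        by (cases "f x \<le> 0") (auto simp: nlog_def ln_less_cancel_iff[symmetric] less_minus_iff)
    qed
  qed
  then show ?thesis
    using True by (simp add: tendsto_PInfty nlog_def)
next
  case False
  then have "0 < L"
    using \<open>0 \<le> L\<close> by simp
  have "((\<lambda>x. ereal (- ln (f x))) \<longlongrightarrow> ereal (- ln L)) F"
    using f \<open>0 < L\<close> by (intro tendsto_intros) auto
  moreover have "\<forall>\<^sub>F x in F. ereal (- ln (f x)) = nlog (f x)"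
    using order_tendstoD(1)[OF f \<open>0 < L\<close>] by eventually_elim (simp add: nlog_def)
  ultimately have "((\<lambda>x. nlog (f x)) \<longlongrightarrow> ereal (- ln L)) F"
    by (rule Lim_transform_eventually)
  then show ?thesis
    using \<open>0 < L\<close> by (simp add: nlog_def)
qed

lemma isCont_one_minus_exp_quotient:
  "isCont (\<lambda>y::real. if y = 0 then 1 else (1 - exp (- y)) / y) 0"
proof -
  have "((\<lambda>y::real. 1 - exp (- y)) has_real_derivative 1) (at 0)"
    by (auto intro!: derivative_eq_intros)
  then have "((\<lambda>y::real. (1 - exp (- y)) / y) \<longlongrightarrow> 1) (at 0)"
    by (simp add: has_field_derivative_iff)
  then show ?thesis
    unfolding isCont_def by (subst LIM_cong[where g = "\<lambda>y. (1 - exp (- y)) / y" and m = 1]) auto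
qed

lemma tendsto_nlog_interval_score:
  fixes len I J :: "nat \<Rightarrow> real"
  assumes len: "\<And>n. 0 < len n" "len \<longlonglongrightarrow> 0"
    and ratio: "(\<lambda>n. I n / len n) \<longlonglongrightarrow> L" and "\<And>n. 0 \<le> I n" "0 \<le> L"
    and J: "J \<longlonglongrightarrow> 0"
  shows "(\<lambda>n. nlog (1 - exp (- I n)) + ereal (ln (len n) - J n)) \<longlonglongrightarrow> nlog L"
proof -
  define g :: "real \<Rightarrow> real" where "g y = (if y = 0 then 1 else (1 - exp (- y)) / y)" for y
  have I: "I \<longlonglongrightarrow> 0"
    using tendsto_mult[OF ratio len(2)] len(1) by (simp add: less_imp_neq[symmetric])
  have "(\<lambda>n. g (I n) * (I n / len n)) \<longlonglongrightarrow> 1 * L"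
    using isCont_tendsto_compose[OF isCont_one_minus_exp_quotient I] ratio
    unfolding g_def by (intro tendsto_mult) auto
  moreover have "g y * y = 1 - exp (- y)" for y
    by (simp add: g_def)
  ultimately have "(\<lambda>n. (1 - exp (- I n)) / len n) \<longlonglongrightarrow> L"
    by simp
  then have "(\<lambda>n. nlog ((1 - exp (- I n)) / len n) + ereal (- J n)) \<longlonglongrightarrow> nlog L + ereal (- 0)"
    using \<open>0 \<le> L\<close> J by (intro tendsto_add_ereal_nonneg tendsto_nlog tendsto_intros) (auto simp: nlog_def)
  then show ?thesis
    using len(1) by (simp add: nlog_divide add.assoc)
qed

lemma sum_ereal_not_MInfty: "(\<And>t. t \<in> S \<Longrightarrow> f t \<noteq> -\<infinity>) \<Longrightarrow> sum f S \<noteq> (-\<infinity> :: ereal)"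
  by (induction S rule: infinite_finite_induct) auto

lemma tendsto_sum_ereal_not_MInfty:
  fixes f :: "'a \<Rightarrow> nat \<Rightarrow> ereal"
  assumes "finite S" "\<And>t. t \<in> S \<Longrightarrow> f t \<longlonglongrightarrow> L t" "\<And>t. t \<in> S \<Longrightarrow> L t \<noteq> -\<infinity>"
  shows "(\<lambda>n. \<Sum>t\<in>S. f t n) \<longlonglongrightarrow> (\<Sum>t\<in>S. L t)"
  using assms
proof (induction S rule: finite_induct)
  case (insert x S)
  then have "(\<lambda>n. f x n + (\<Sum>t\<in>S. f t n)) \<longlonglongrightarrow> L x + (\<Sum>t\<in>S. L t)"
    by (intro tendsto_add_ereal_nonneg) (auto simp: sum_ereal_not_MInfty)
  then show ?case
    using insert by simp
qed simp

lemma hist_eq_if_no_points_between: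
  assumes "finite \<phi>" "w \<le> u" "\<And>s. s \<in> \<phi> \<Longrightarrow> w \<le> s \<Longrightarrow> u \<le> s"
  shows "hist \<phi> u = hist \<phi> w"
proof -
  have "{s \<in> \<phi>. s < u} = {s \<in> \<phi>. s < w}"
    using assms(2,3) by force
  then show ?thesis
    by (simp add: hist_def)
qed

lemma Suc_le_card_le_if_nth_le:
  fixes A :: "'a::linorder set"
  assumes "finite A" "j < card A" "sorted_list_of_set A ! j \<le> c"
  shows "Suc j \<le> card {x \<in> A. x \<le> c}"
proof -
  let ?xs = "sorted_list_of_set A"
  have sub: "(!) ?xs ` {..j} \<subseteq> {x \<in> A. x \<le> c}"
  proof (rule image_subsetI)
    fix l assume "l \<in> {..j}"
    then have "l < length ?xs" "?xs ! l \<le> ?xs ! j"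
      using sorted_nth_mono[OF sorted_sorted_list_of_set, of l j] assms(2) by auto
    then show "?xs ! l \<in> {x \<in> A. x \<le> c}"
      using assms(1,3) nth_mem[of l ?xs] by auto
  qed
  have "inj_on ((!) ?xs) {..j}"
    using assms(2) by (intro inj_on_nth) auto
  then have "card ((!) ?xs ` {..j}) = Suc j"
    by (simp add: card_image)
  then show ?thesis
    using card_mono[OF _ sub] assms(1) by simp
qed

lemma card_le_le_if_less_nth:
  fixes A :: "'a::linorder set"
  assumes "finite A" "c < sorted_list_of_set A ! j"
  shows "card {x \<in> A. x \<le> c} \<le> j"
proof -
  let ?xs = "sorted_list_of_set A"
  have "{x \<in> A. x \<le> c} \<subseteq> (!) ?xs ` {..<j}"
  proof
    fix x assume x: "x \<in> {x \<in> A. x \<le> c}"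
    then have "x \<in> set ?xs"
      using assms(1) by simp
    then obtain l where l: "l < length ?xs" "x = ?xs ! l"
      by (auto simp: in_set_conv_nth)
    have "l < j"
    proof (rule ccontr)
      assume "\<not> l < j"
      then have "?xs ! j \<le> ?xs ! l"
        using sorted_nth_mono[OF sorted_sorted_list_of_set, of j l A] l(1) by simp
      moreover have "?xs ! l \<le> c"
        using x l(2) by simp
      ultimately show False
        using order_trans assms(2) by (blast dest: leD)
    qed
    then show "x \<in> (!) ?xs ` {..<j}"
      using l(2) by blast
  qed
  then have "card {x \<in> A. x \<le> c} \<le> card ((!) ?xs ` {..<j})"
    by (rule card_mono[rotated]) simp
  also have "\<dots> \<le> j"
    using card_image_le[of "{..<j}" "(!) ?xs"] by simp
  finally show ?thesis .
qed

lemma nth_sorted_list_of_set_le_iff: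
  fixes A :: "'a::linorder set"
  assumes "finite A" "j < card A"
  shows "sorted_list_of_set A ! j \<le> c \<longleftrightarrow> j < card {x \<in> A. x \<le> c}"
  using Suc_le_card_le_if_nth_le[OF assms] card_le_le_if_less_nth[OF assms(1), of c j] by force

lemma hist_nth_sorted_list_of_set:
  assumes "finite \<phi>" "j < card \<phi>"
  shows "hist \<phi> (sorted_list_of_set \<phi> ! j) = take j (sorted_list_of_set \<phi>)"
proof -
  define xs where "xs = sorted_list_of_set \<phi>"
  have xs: "sorted_wrt (<) xs" "set xs = \<phi>" "length xs = card \<phi>"
    using assms(1) by (simp_all add: xs_def)
  have "{s \<in> \<phi>. s < xs ! j} = set (take j xs)"
  proof (intro set_eqI iffI)
    fix s assume "s \<in> {s \<in> \<phi>. s < xs ! j}"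
    then obtain l where l: "l < length xs" "s = xs ! l" "xs ! l < xs ! j"
      using xs(2) by (auto simp: in_set_conv_nth)
    have "l < j"
    proof (rule ccontr)
      assume "\<not> l < j"
      then have "xs ! j \<le> xs ! l"
        using sorted_nth_mono[OF strict_sorted_imp_sorted[OF xs(1)]] l(1) by simp
      then show False
        using l(3) by simp
    qed
    then show "s \<in> set (take j xs)"
      using l(1,2) by (auto simp: in_set_conv_nth)
  next
    fix s assume "s \<in> set (take j xs)"
    then obtain l where "l < j" "s = xs ! l"
      using assms(2) xs(3) by (auto simp: in_set_conv_nth)
    then show "s \<in> {s \<in> \<phi>. s < xs ! j}"
      using sorted_wrt_nth_less[OF xs(1)] assms(2) xs by auto
  qed
  moreover have "sorted_list_of_set (set (take j xs)) = take j xs"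
    using xs(1) by (intro strict_sorted_equal) (auto intro: sorted_wrt_take)
  ultimately show ?thesis
    by (simp add: hist_def xs_def)
qed

lemma map_inv_into_eq:
  assumes "set ys \<subseteq> f ` I"
  shows "map f (map (inv_into I f) ys) = ys"
  unfolding map_map comp_def using assms by (intro map_idI f_inv_into_f) auto

lemma notin_set_if_map_eq_take:
  fixes xs :: "'a::order list"
  assumes "sorted_wrt (<) xs" "j < length xs" "map x \<sigma> = take j xs" "x i = xs ! j"
  shows "i \<notin> set \<sigma>"
proof
  assume "i \<in> set \<sigma>"
  then obtain p where p: "p < length \<sigma>" "\<sigma> ! p = i"
    by (auto simp: in_set_conv_nth)
  moreover have "length \<sigma> = j"
    using arg_cong[OF assms(3), of length] assms(2) by simp
  ultimately have "x i = xs ! p"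
    using assms(3) by (metis nth_map nth_take)
  then show False
    using sorted_wrt_nth_less[OF assms(1) _ assms(2), of p] p \<open>length \<sigma> = j\<close> assms(4) by simp
qed

lemma space_config_space: "space (config_space T) = {\<phi>. finite \<phi> \<and> \<phi> \<subseteq> {0..T}}"
  unfolding config_space_def by (rule space_measure_of) auto

lemma sets_config_space: "sets (config_space T) = sigma_sets {\<phi>. finite \<phi> \<and> \<phi> \<subseteq> {0..T}}
    {{\<phi>. finite \<phi> \<and> \<phi> \<subseteq> {0..T} \<and> card (\<phi> \<inter> A) = j} | A j. A \<in> sets borel}"
  unfolding config_space_def by (rule sets_measure_of) auto

lemma sets_config_space_count:
  assumes "S \<in> sets borel"
  shows "{\<phi> \<in> space (config_space T). card (\<phi> \<inter> S) = j} \<in> sets (config_space T)"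
proof -
  have "{\<phi> \<in> space (config_space T). card (\<phi> \<inter> S) = j} =
      {\<phi>. finite \<phi> \<and> \<phi> \<subseteq> {0..T} \<and> card (\<phi> \<inter> S) = j}"
    by (auto simp: space_config_space)
  also have "\<dots> \<in> sets (config_space T)"
    unfolding sets_config_space using assms by (intro sigma_sets.Basic) blast
  finally show ?thesis .
qed

lemma sets_config_space_count_greater:
  assumes "S \<in> sets borel"
  shows "{\<phi> \<in> space (config_space T). j < card (\<phi> \<inter> S)} \<in> sets (config_space T)"
proof -
  have "{\<phi> \<in> space (config_space T). j < card (\<phi> \<inter> S)}
      = (\<Union>l\<in>{j<..}. {\<phi> \<in> space (config_space T). card (\<phi> \<inter> S) = l})"
    by auto
  also have "\<dots> \<in> sets (config_space T)"
    using sets_config_space_count[OF assms] by (intro sets.countable_UN) auto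
  finally show ?thesis .
qed

definition nth_point :: "nat \<Rightarrow> real set \<Rightarrow> real" where
  "nth_point j \<phi> = (if j < card \<phi> then sorted_list_of_set \<phi> ! j else 0)"

lemma borel_measurable_nth_point: "nth_point j \<in> borel_measurable (config_space T)"
proof (subst borel_measurable_iff_le, intro allI)
  fix c :: real
  let ?more = "\<lambda>S. {\<phi> \<in> space (config_space T). j < card (\<phi> \<inter> S)}"
  have "{\<phi> \<in> space (config_space T). nth_point j \<phi> \<le> c} =
      (?more UNIV \<inter> ?more {..c}) \<union> ((space (config_space T) - ?more UNIV) \<inter> {\<phi>. 0 \<le> c})"
    by (auto simp: nth_point_def space_config_space nth_sorted_list_of_set_le_iff Int_def
        simp del: Int_UNIV_right)
  also have "\<dots> \<in> sets (config_space T)"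
    using sets_config_space_count_greater[where S = UNIV and j = j and T = T]
      sets_config_space_count_greater[where S = "{..c}" and j = j and T = T]
    by (cases "0 \<le> c") auto
  finally show "{\<phi> \<in> space (config_space T). nth_point j \<phi> \<le> c} \<in> sets (config_space T)" .
qed

lemma restrict_nth_point_eq:
  assumes "map x \<sigma> = take j (sorted_list_of_set \<phi>)" "j \<le> card \<phi>"
  shows "(\<lambda>l\<in>{..<length \<sigma>}. x (\<sigma> ! l)) = (\<lambda>l\<in>{..<j}. nth_point l \<phi>)"
proof -
  have length: "length \<sigma> = j"
    using arg_cong[OF assms(1), of length] assms(2) by simp
  show ?thesis
    unfolding length
  proof (rule restrict_ext)
    fix l assume "l \<in> {..<j}"
    then have "x (\<sigma> ! l) = take j (sorted_list_of_set \<phi>) ! l"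
      using assms(1) length by (metis lessThan_iff nth_map)
    then show "x (\<sigma> ! l) = nth_point l \<phi>"
      using \<open>l \<in> {..<j}\<close> assms(2) by (simp add: nth_point_def)
  qed
qed

section \<open>Cells of a dissecting system\<close>

locale dissecting_system =
  fixes T :: real and k :: "nat \<Rightarrow> nat" and a b :: "nat \<Rightarrow> nat \<Rightarrow> real"
  assumes T_pos: "0 < T" and dissecting: "dissecting T k a b"
begin

abbreviation cell :: "nat \<Rightarrow> nat \<Rightarrow> real set" where
  "cell n i \<equiv> {a n i<..b n i}"

lemma interval_partition: "interval_partition T (k n) (a n) (b n)"
  using dissecting by (simp add: dissecting_def)

lemma a_less_b: "i < k n \<Longrightarrow> a n i < b n i"
  using interval_partition[of n] by (simp add: interval_partition_def)

lemma cell_subset: "i < k n \<Longrightarrow> cell n i \<subseteq> {0<..T}"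
  using interval_partition[of n] unfolding interval_partition_def by blast

lemma closed_cell_subset: "i < k n \<Longrightarrow> {a n i..b n i} \<subseteq> {0..T}"
  using cell_subset[of i n] a_less_b[of i n] Ioc_subset_iff[of "a n i" "b n i" 0 T] by auto

lemma cells_disjoint: "i < k n \<Longrightarrow> j < k n \<Longrightarrow> x \<in> cell n i \<Longrightarrow> x \<in> cell n j \<Longrightarrow> i = j"
  using interval_partition[of n] unfolding interval_partition_def by blast

lemma cells_cover: "x \<in> {0<..T} \<Longrightarrow> \<exists>i<k n. x \<in> cell n i"
  using interval_partition[of n] unfolding interval_partition_def by blast

definition cell_index :: "nat \<Rightarrow> real \<Rightarrow> nat" where
  "cell_index n x = (THE i. i < k n \<and> x \<in> cell n i)"

lemma cell_index_eq: "i < k n \<Longrightarrow> x \<in> cell n i \<Longrightarrow> cell_index n x = i"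
  unfolding cell_index_def by (rule the_equality) (use cells_disjoint in blast)+

lemma cell_index:
  assumes "x \<in> {0<..T}"
  shows "cell_index n x < k n" and "x \<in> cell n (cell_index n x)"
  using cells_cover[OF assms, of n] cell_index_eq by force+

abbreviation cell_lb :: "nat \<Rightarrow> real \<Rightarrow> real" where
  "cell_lb n x \<equiv> a n (cell_index n x)"

abbreviation cell_ub :: "nat \<Rightarrow> real \<Rightarrow> real" where
  "cell_ub n x \<equiv> b n (cell_index n x)"

abbreviation cell_of :: "nat \<Rightarrow> real \<Rightarrow> real set" where
  "cell_of n x \<equiv> cell n (cell_index n x)"

lemma cell_lb_less_ub: "x \<in> {0<..T} \<Longrightarrow> cell_lb n x < cell_ub n x"
  using a_less_b cell_index by blast

lemma cell_of_antimono:
  assumes x: "x \<in> {0<..T}" and "n \<le> m"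
  shows "cell_of m x \<subseteq> cell_of n x"
proof (rule lift_Suc_antimono_le[where f = "\<lambda>n. cell_of n x", OF _ \<open>n \<le> m\<close>])
  fix n
  obtain j where j: "j < k n" "cell (Suc n) (cell_index (Suc n) x) \<subseteq> cell n j"
    using dissecting cell_index(1)[OF x, of "Suc n"] unfolding dissecting_def by blast
  then have "cell_index n x = j"
    using cell_index(2)[OF x, of "Suc n"] by (blast intro: cell_index_eq)
  then show "cell_of (Suc n) x \<subseteq> cell_of n x"
    using j by simp
qed

lemma cells_nested_or_disjoint:
  assumes "n \<le> m" "i < k n" "j < k m"
  shows "cell m j \<subseteq> cell n i \<or> cell m j \<inter> cell n i = {}"
proof (rule disjCI)
  assume "cell m j \<inter> cell n i \<noteq> {}"
  then obtain z where z: "z \<in> cell m j" "z \<in> cell n i" by blast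
  then have "z \<in> {0<..T}" using cell_subset[OF assms(2)] by blast
  then show "cell m j \<subseteq> cell n i"
    using cell_of_antimono[OF _ assms(1)] cell_index_eq assms(2,3) z by metis
qed

lemma cell_bounds_mono:
  assumes "x \<in> {0<..T}" "n \<le> m"
  shows "cell_lb n x \<le> cell_lb m x" and "cell_ub m x \<le> cell_ub n x"
  using cell_of_antimono[OF assms] cell_lb_less_ub[OF assms(1), of m] by (auto simp: Ioc_subset_iff)

lemma eventually_not_in_cell_of:
  assumes "x \<in> {0<..T}" "y \<in> {0<..T}" "x \<noteq> y"
  shows "\<forall>\<^sub>F n in sequentially. y \<notin> cell_of n x"
proof -
  obtain N where N: "\<forall>i<k N. \<not> (x \<in> cell N i \<and> y \<in> cell N i)"
    using dissecting assms unfolding dissecting_def by blast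
  then have "y \<notin> cell_of n x" if "N \<le> n" for n
    using cell_of_antimono[OF assms(1) that] cell_index[OF assms(1), of N] by blast
  then show ?thesis
    unfolding eventually_sequentially by blast
qed

lemma mem_all_cells_of_eq:
  assumes "x \<in> {0<..T}" "y \<in> {0<..T}" "\<And>n. y \<in> cell_of n x"
  shows "y = x"
proof (rule ccontr)
  assume "y \<noteq> x"
  then obtain N where "\<And>n. N \<le> n \<Longrightarrow> y \<notin> cell_of n x"
    using eventually_not_in_cell_of[OF assms(1,2)] unfolding eventually_sequentially by auto
  then show False
    using assms(3)[of N] by blast
qed

lemma cell_bounds_tendsto:
  assumes x: "x \<in> {0<..T}"
  shows "(\<lambda>n. cell_lb n x) \<longlonglongrightarrow> x" and "(\<lambda>n. cell_ub n x) \<longlonglongrightarrow> x"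
proof -
  have lb: "\<forall>n. cell_lb n x \<le> x" and ub: "\<forall>n. x \<le> cell_ub n x"
    using cell_index(2)[OF x] by (auto simp: less_imp_le)
  have inc: "incseq (\<lambda>n. cell_lb n x)"
    by (rule monoI) (rule cell_bounds_mono(1)[OF x])
  have dec: "decseq (\<lambda>n. cell_ub n x)"
    by (rule antimonoI) (rule cell_bounds_mono(2)[OF x])
  obtain \<alpha> \<beta> where \<alpha>: "(\<lambda>n. cell_lb n x) \<longlonglongrightarrow> \<alpha>" and \<beta>: "(\<lambda>n. cell_ub n x) \<longlonglongrightarrow> \<beta>"
    using incseq_convergent[OF inc lb] decseq_convergent[OF dec ub] by metis
  have \<alpha>_bounds: "cell_lb n x \<le> \<alpha>" "\<alpha> \<le> x" and \<beta>_bounds: "\<beta> \<le> cell_ub n x" "x \<le> \<beta>" for n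
    using incseq_le[OF inc \<alpha>] decseq_ge[OF dec \<beta>] Lim_bounded[OF \<alpha>, of 0] Lim_bounded2[OF \<beta>, of 0] lb ub
    by auto
  have "0 \<le> cell_lb 0 x" "cell_ub 0 x \<le> T"
    using closed_cell_subset[OF cell_index(1)[OF x, of 0]] a_less_b[OF cell_index(1)[OF x, of 0]]
    by auto
  \<comment> \<open>a point strictly between \<open>\<alpha>\<close> (or \<open>\<beta>\<close>) and \<open>x\<close> would lie in every cell containing \<open>x\<close>\<close>
  moreover have "x \<le> \<alpha>"
  proof (rule ccontr)
    assume "\<not> x \<le> \<alpha>"
    then have "(\<alpha> + x) / 2 \<in> {0<..T}" "(\<alpha> + x) / 2 \<in> cell_of n x" for n
      using \<alpha>_bounds(1)[of n] \<alpha>_bounds(1)[of 0] ub[rule_format, of n] \<open>0 \<le> cell_lb 0 x\<close> x by auto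
    then show False
      using mem_all_cells_of_eq[OF x, of "(\<alpha> + x) / 2"] \<open>\<not> x \<le> \<alpha>\<close> by auto
  qed
  moreover have "\<beta> \<le> x"
  proof (rule ccontr)
    assume "\<not> \<beta> \<le> x"
    then have "(x + \<beta>) / 2 \<in> {0<..T}" "(x + \<beta>) / 2 \<in> cell_of n x" for n
      using \<beta>_bounds(1)[of n] \<beta>_bounds(1)[of 0] cell_index(2)[OF x, of n] \<open>cell_ub 0 x \<le> T\<close> x by auto
    then show False
      using mem_all_cells_of_eq[OF x, of "(x + \<beta>) / 2"] \<open>\<not> \<beta> \<le> x\<close> by auto
  qed
  ultimately have "\<alpha> = x" "\<beta> = x"
    using \<alpha>_bounds(2) \<beta>_bounds(2) by (auto intro: order.antisym)
  then show "(\<lambda>n. cell_lb n x) \<longlonglongrightarrow> x" and "(\<lambda>n. cell_ub n x) \<longlonglongrightarrow> x"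
    using \<alpha> \<beta> by simp_all
qed

lemma eventually_not_in_closed_cell_of:
  assumes x: "x \<in> {0<..T}" and "t \<noteq> x"
  shows "\<forall>\<^sub>F n in sequentially. t \<notin> {cell_lb n x..cell_ub n x}"
proof (cases "t < x")
  case True
  have "\<forall>\<^sub>F n in sequentially. t < cell_lb n x"
    using order_tendstoD(1)[OF cell_bounds_tendsto(1)[OF x] True] .
  then show ?thesis
    by eventually_elim auto
next
  case False
  with \<open>t \<noteq> x\<close> have "x < t"
    by simp
  have "\<forall>\<^sub>F n in sequentially. cell_ub n x < t"
    using order_tendstoD(2)[OF cell_bounds_tendsto(2)[OF x] \<open>x < t\<close>] .
  then show ?thesis
    by eventually_elim auto
qed

lemma eventually_cell_of_subset:
  assumes x: "x \<in> {0<..T}" and "open U" "x \<in> U"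
  shows "\<forall>\<^sub>F n in sequentially. cell_of n x \<subseteq> U"
proof -
  obtain d where d: "0 < d" "ball x d \<subseteq> U"
    using assms open_contains_ball by blast
  have "\<forall>\<^sub>F n in sequentially. x - d < cell_lb n x" "\<forall>\<^sub>F n in sequentially. cell_ub n x < x + d"
    using cell_bounds_tendsto[OF x] d(1) by (auto intro: order_tendstoD)
  then show ?thesis
  proof eventually_elim
    case (elim n)
    have "cell_lb n x < x" "x \<le> cell_ub n x"
      using cell_index(2)[OF x, of n] by auto
    with elim have "cell_of n x \<subseteq> ball x d"
      by (auto simp: dist_real_def)
    then show ?case
      using d(2) by blast
  qed
qed

lemma set_integral_partition:
  fixes f :: "real \<Rightarrow> real"
  assumes f: "set_integrable lborel {0..T} f"
  shows "(\<integral>t\<in>{0..T}. f t \<partial>lborel) = (\<Sum>i<k n. \<integral>t\<in>{a n i..b n i}. f t \<partial>lborel)"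
proof -
  have f_cell: "set_integrable lborel (cell n i) f" if "i < k n" for i
    using cell_subset[OF that] by (intro set_integrable_subset[OF f]) auto
  have "(\<integral>t\<in>{0..T}. f t \<partial>lborel) = (\<integral>t\<in>{0<..T}. f t \<partial>lborel)"
    by (rule set_integral_discrete_difference[where X = "{0}"]) auto
  also have "{0<..T} = (\<Union>i<k n. cell n i)"
    using interval_partition[of n] unfolding interval_partition_def by simp
  also have "(\<integral>t\<in>(\<Union>i<k n. cell n i). f t \<partial>lborel) = (\<Sum>i<k n. \<integral>t\<in>cell n i. f t \<partial>lborel)"
    using interval_partition[of n] f_cell unfolding interval_partition_def
    by (intro set_integral_finite_Union) (auto simp: disjoint_family_on_def)
  also have "\<dots> = (\<Sum>i<k n. \<integral>t\<in>{a n i..b n i}. f t \<partial>lborel)"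
    by (intro sum.cong refl set_integral_discrete_difference[where X = "{a n i}" for i]) auto
  finally show ?thesis .
qed

lemma cell_integral_tendsto_0:
  fixes f :: "real \<Rightarrow> real"
  assumes f: "set_integrable lborel {0..T} f" and x: "x \<in> {0<..T}"
  shows "(\<lambda>n. \<integral>t\<in>{cell_lb n x..cell_ub n x}. f t \<partial>lborel) \<longlonglongrightarrow> 0"
proof -
  have "(\<lambda>n. \<integral>t. indicator {cell_lb n x..cell_ub n x} t *\<^sub>R f t \<partial>lborel) \<longlonglongrightarrow> (\<integral>t. 0 \<partial>(lborel :: real measure))"
  proof (rule integral_dominated_convergence[where w = "\<lambda>t. norm (indicator {0..T} t *\<^sub>R f t)"])
    show "integrable lborel (\<lambda>t. norm (indicator {0..T} t *\<^sub>R f t))"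
      using f unfolding set_integrable_def by (rule integrable_norm)
    show "(\<lambda>t. indicator {cell_lb n x..cell_ub n x} t *\<^sub>R f t) \<in> borel_measurable lborel" for n
    proof -
      have "set_integrable lborel {cell_lb n x..cell_ub n x} f"
        using closed_cell_subset[OF cell_index(1)[OF x, of n]] by (intro set_integrable_subset[OF f]) auto
      then show ?thesis
        unfolding set_integrable_def by (rule borel_measurable_integrable)
    qed
    show "AE t in lborel. norm (indicator {cell_lb n x..cell_ub n x} t *\<^sub>R f t)
        \<le> norm (indicator {0..T} t *\<^sub>R f t)" for n
    proof (rule AE_I2)
      fix t
      show "norm (indicator {cell_lb n x..cell_ub n x} t *\<^sub>R f t) \<le> norm (indicator {0..T} t *\<^sub>R f t)"
      proof (cases "t \<in> {cell_lb n x..cell_ub n x}")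
        case True
        then have "t \<in> {0..T}"
          using closed_cell_subset[OF cell_index(1)[OF x]] by blast
        with True show ?thesis
          by (simp only: indicator_simps)
      qed (metis indicator_simps(2) norm_ge_zero norm_zero scaleR_zero_left)
    qed
    show "AE t in lborel. (\<lambda>n. indicator {cell_lb n x..cell_ub n x} t *\<^sub>R f t) \<longlonglongrightarrow> 0"
      using AE_lborel_singleton[of x]
    proof eventually_elim
      case (elim t)
      then have "\<forall>\<^sub>F n in sequentially. t \<notin> {cell_lb n x..cell_ub n x}"
        by (intro eventually_not_in_closed_cell_of[OF x]) simp
      then have "\<forall>\<^sub>F n in sequentially. indicator {cell_lb n x..cell_ub n x} t *\<^sub>R f t = 0"
        by eventually_elim simp
      then show ?case
        by (rule tendsto_eventually)
    qed
  qed simp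
  then show ?thesis
    by (simp add: set_lebesgue_integral_def)
qed

section \<open>Differentiation of integrals along a dissecting system\<close>

lemma cell_index_eq_if_cells_meet:
  assumes x: "x \<in> {0<..T}" and y: "y \<in> {0<..T}" and "n \<le> m"
    and meet: "cell_of m y \<inter> cell_of n x \<noteq> {}"
  shows "cell_index n y = cell_index n x"
proof -
  have "cell_of m y \<subseteq> cell_of n x"
    using cells_nested_or_disjoint[OF \<open>n \<le> m\<close> cell_index(1)[OF x] cell_index(1)[OF y]] meet by blast
  then have "y \<in> cell_of n x"
    using cell_index(2)[OF y] by blast
  then show ?thesis
    using cell_index_eq cell_index(1)[OF x] by blast
qed

text \<open>Every point of \<open>E\<close> selects the coarsest admissible cell containing it; by nestedness,
  two selected cells that meet coincide.\<close>

lemma disjoint_cell_cover: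
  assumes E: "E \<subseteq> {0<..T}" and Q: "\<And>x. x \<in> E \<Longrightarrow> \<exists>n. Q n (cell_index n x)"
  obtains P where "countable P" "\<And>n i. (n, i) \<in> P \<Longrightarrow> i < k n \<and> Q n i"
    "disjoint_family_on (\<lambda>(n, i). cell n i) P" "E \<subseteq> (\<Union>(n, i)\<in>P. cell n i)"
proof
  define m where "m x = (LEAST n. Q n (cell_index n x))" for x
  have Qm: "Q (m x) (cell_index (m x) x)" if "x \<in> E" for x
    unfolding m_def using Q[OF that] by (rule LeastI_ex)
  have x: "x \<in> {0<..T}" if "x \<in> E" for x
    using that E by blast
  define P where "P = (\<lambda>x. (m x, cell_index (m x) x)) ` E"
  show "countable P"
    by (rule countable_subset[of _ UNIV]) auto
  show "i < k n \<and> Q n i" if "(n, i) \<in> P" for n i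
    using that Qm cell_index(1)[OF x] unfolding P_def by auto
  show "E \<subseteq> (\<Union>(n, i)\<in>P. cell n i)"
    using cell_index(2)[OF x] unfolding P_def by force
  have same: "(m x, cell_index (m x) x) = (m y, cell_index (m y) y)"
    if xy: "x \<in> E" "y \<in> E" "m x \<le> m y" and meet: "cell_of (m y) y \<inter> cell_of (m x) x \<noteq> {}" for x y
  proof -
    have same_cell: "cell_index (m x) y = cell_index (m x) x"
      using cell_index_eq_if_cells_meet[OF x[OF xy(1)] x[OF xy(2)] xy(3) meet] .
    then have "m y \<le> m x"
      unfolding m_def[of y] using Qm[OF xy(1)] by (simp add: Least_le)
    then show ?thesis
      using xy(3) same_cell by simp
  qed
  show "disjoint_family_on (\<lambda>(n, i). cell n i) P"
    unfolding disjoint_family_on_def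
  proof (intro ballI impI)
    fix p q assume "p \<in> P" "q \<in> P" "p \<noteq> q"
    then obtain x y where xy: "x \<in> E" "y \<in> E"
      "p = (m x, cell_index (m x) x)" "q = (m y, cell_index (m y) y)"
      unfolding P_def by blast
    have "cell_of (m y) y \<inter> cell_of (m x) x = {}"
      using same[OF xy(1,2)] same[OF xy(2,1)] xy(3,4) \<open>p \<noteq> q\<close> nat_le_linear[of "m x" "m y"]
      by (metis Int_commute)
    then show "(\<lambda>(n, i). cell n i) p \<inter> (\<lambda>(n, i). cell n i) q = {}"
      using xy(3,4) by (simp add: Int_commute)
  qed
qed

lemma emeasure_le_of_frequently_cells:
  fixes \<mu> \<nu> :: "real measure"
  assumes sets: "sets \<mu> = sets borel" "sets \<nu> = sets borel"
    and finite: "emeasure \<nu> (space \<nu>) \<noteq> \<infinity>"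
    and E: "E \<in> sets borel" "E \<subseteq> {0<..T}"
    and le: "\<And>x. x \<in> E \<Longrightarrow> \<exists>\<^sub>F n in sequentially.
               emeasure \<mu> (cell_of n x) \<le> emeasure \<nu> (cell_of n x)"
  shows "emeasure \<mu> E \<le> emeasure \<nu> E"
proof -
  have "emeasure \<mu> E \<le> emeasure \<nu> U" if U: "open U" "E \<subseteq> U" for U
  proof -
    define Q where "Q n i \<longleftrightarrow> cell n i \<subseteq> U \<and> emeasure \<mu> (cell n i) \<le> emeasure \<nu> (cell n i)" for n i
    have ex: "\<exists>n. Q n (cell_index n x)" if x: "x \<in> E" for x
    proof -
      have x0: "x \<in> {0<..T}" and xU: "x \<in> U"
        using x E(2) U(2) by auto
      show ?thesis
        unfolding Q_def
        by (rule frequently_ex[OF frequently_eventually_conj[OF le[OF x] eventually_cell_of_subset[OF x0 U(1) xU]]])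
    qed
    obtain P where P: "countable P" "\<And>n i. (n, i) \<in> P \<Longrightarrow> i < k n \<and> Q n i"
      "disjoint_family_on (\<lambda>(n, i). cell n i) P" "E \<subseteq> (\<Union>(n, i)\<in>P. cell n i)"
      by (rule disjoint_cell_cover[where Q = Q, OF E(2) ex]) blast+
    let ?C = "\<lambda>(n, i). cell n i"
    have C_sets: "?C p \<in> sets borel" for p
      by (cases p) simp
    have "emeasure \<mu> E \<le> emeasure \<mu> (\<Union>(?C ` P))"
      using P(1,4) C_sets sets by (intro emeasure_mono) auto
    also have "\<dots> = (\<integral>\<^sup>+p. emeasure \<mu> (?C p) \<partial>count_space P)"
      using P(1,3) C_sets sets by (intro emeasure_UN_countable) auto
    also have "\<dots> \<le> (\<integral>\<^sup>+p. emeasure \<nu> (?C p) \<partial>count_space P)"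
      using P(2) by (intro nn_integral_mono) (auto simp: Q_def)
    also have "\<dots> = emeasure \<nu> (\<Union>(?C ` P))"
      using P(1,3) C_sets sets by (intro emeasure_UN_countable[symmetric]) auto
    also have "\<dots> \<le> emeasure \<nu> U"
      using P(2) U(1) sets by (intro emeasure_mono) (auto simp: Q_def)
    finally show ?thesis .
  qed
  then show ?thesis
    using outer_regular[OF sets(2) finite E(1)] by (simp add: le_INF_iff)
qed

text \<open>A sum over the cells rather than a case distinction on the cell containing \<open>x\<close>,
  so that measurability in \<open>x\<close> is immediate.\<close>

definition cell_avg :: "(real \<Rightarrow> real) \<Rightarrow> nat \<Rightarrow> real \<Rightarrow> real" where
  "cell_avg f n x =
     (\<Sum>i<k n. indicator (cell n i) x * ((\<integral>t\<in>{a n i..b n i}. f t \<partial>lborel) / (b n i - a n i)))"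

lemma borel_measurable_cell_avg[measurable]: "cell_avg f n \<in> borel_measurable borel"
  unfolding cell_avg_def by measurable

lemma cell_avg_eq:
  assumes x: "x \<in> {0<..T}"
  shows "cell_avg f n x =
    (\<integral>t\<in>{cell_lb n x..cell_ub n x}. f t \<partial>lborel) / (cell_ub n x - cell_lb n x)"
proof -
  have "indicator (cell n i) x = (if i = cell_index n x then 1 else 0 :: real)" if "i < k n" for i
  proof (cases "i = cell_index n x")
    case True
    then show ?thesis
      using cell_index(2)[OF x, of n] by simp
  next
    case False
    then show ?thesis
      using cell_index_eq[OF that, of x] by (auto simp: indicator_def)
  qed
  then have "cell_avg f n x = (\<Sum>i<k n. if i = cell_index n x
      then (\<integral>t\<in>{a n i..b n i}. f t \<partial>lborel) / (b n i - a n i) else 0)"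
    unfolding cell_avg_def by (intro sum.cong) auto
  then show ?thesis
    using cell_index(1)[OF x, of n] by simp
qed

lemma cell_avg_nonneg:
  assumes "\<And>t. 0 \<le> f t"
  shows "0 \<le> cell_avg f n x"
  unfolding cell_avg_def set_lebesgue_integral_def
  using assms a_less_b by (intro sum_nonneg mult_nonneg_nonneg divide_nonneg_pos integral_nonneg) auto

lemma cell_avg_cong:
  assumes "\<And>t. t \<in> {0..T} \<Longrightarrow> f t = g t"
  shows "cell_avg f n x = cell_avg g n x"
  unfolding cell_avg_def
proof (intro sum.cong refl arg_cong2[where f = "(*)"] arg_cong2[where f = "(/)"])
  fix i assume "i \<in> {..<k n}"
  then have "{a n i..b n i} \<subseteq> {0..T}"
    using closed_cell_subset by blast
  then show "(\<integral>t\<in>{a n i..b n i}. f t \<partial>lborel) = (\<integral>t\<in>{a n i..b n i}. g t \<partial>lborel)"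
    using assms by (intro set_lebesgue_integral_cong) auto
qed

lemma emeasure_lborel_subset_finite: "A \<subseteq> {0<..T} \<Longrightarrow> emeasure lborel A \<noteq> \<infinity>"
  using emeasure_mono[of A "{0<..T}" lborel] T_pos by (auto simp: top_unique)

lemma emeasure_density_cell_of:
  assumes F: "integrable lborel F" "\<And>t. 0 \<le> F t" and x: "x \<in> {0<..T}"
  shows "emeasure (density lborel (\<lambda>t. ennreal (F t))) (cell_of n x)
    = ennreal (cell_avg F n x) * emeasure lborel (cell_of n x)"
proof -
  have len: "0 < cell_ub n x - cell_lb n x"
    using cell_lb_less_ub[OF x] by simp
  have "(\<integral>t\<in>cell_of n x. F t \<partial>lborel) = (\<integral>t\<in>{cell_lb n x..cell_ub n x}. F t \<partial>lborel)"
    by (rule set_integral_discrete_difference[where X = "{cell_lb n x}"]) auto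
  also have "\<dots> = cell_avg F n x * (cell_ub n x - cell_lb n x)"
    using len by (simp add: cell_avg_eq[OF x])
  finally show ?thesis
    using len cell_avg_nonneg[OF F(2)]
    by (simp add: emeasure_density_eq_set_integral[OF F] ennreal_mult)
qed

lemma null_sets_frequently_avg_above:
  assumes F: "integrable lborel F" "\<And>t. 0 \<le> F t" and "0 < u" "u < v"
  shows "{x\<in>{0<..T}. F x < u \<and> (\<exists>\<^sub>F n in sequentially. v < cell_avg F n x)} \<in> null_sets lborel"
proof -
  define E where "E = {x\<in>{0<..T}. F x < u \<and> (\<exists>\<^sub>F n in sequentially. v < cell_avg F n x)}"
  have [measurable]: "F \<in> borel_measurable borel"
    using F(1) by auto
  have E: "E \<in> sets borel" "E \<subseteq> {0<..T}"
    unfolding E_def frequently_def by measurable auto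
  have "emeasure (density lborel (\<lambda>_. ennreal v)) E \<le> emeasure (density lborel (\<lambda>t. ennreal (F t))) E"
  proof (rule emeasure_le_of_frequently_cells[OF _ _ _ E])
    show "emeasure (density lborel (\<lambda>t. ennreal (F t))) (space (density lborel (\<lambda>t. ennreal (F t)))) \<noteq> \<infinity>"
      using emeasure_density_eq_set_integral[OF F, of UNIV] by simp
    fix x assume "x \<in> E"
    then have x: "x \<in> {0<..T}" and freq: "\<exists>\<^sub>F n in sequentially. v < cell_avg F n x"
      by (auto simp: E_def)
    show "\<exists>\<^sub>F n in sequentially. emeasure (density lborel (\<lambda>_. ennreal v)) (cell_of n x)
        \<le> emeasure (density lborel (\<lambda>t. ennreal (F t))) (cell_of n x)"
      using freq
    proof (rule frequently_elim1)
      fix n assume "v < cell_avg F n x"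
      then show "emeasure (density lborel (\<lambda>_. ennreal v)) (cell_of n x)
          \<le> emeasure (density lborel (\<lambda>t. ennreal (F t))) (cell_of n x)"
        by (simp add: emeasure_density_const emeasure_density_cell_of[OF F x])
          (intro mult_right_mono ennreal_leI, auto)
    qed
  qed simp_all
  also have "\<dots> = (\<integral>\<^sup>+t. ennreal (F t) * indicator E t \<partial>lborel)"
    using E by (intro emeasure_density) auto
  also have "\<dots> \<le> (\<integral>\<^sup>+t. ennreal u * indicator E t \<partial>lborel)"
    by (intro nn_integral_mono) (auto simp: E_def split: split_indicator intro: ennreal_leI)
  finally have "ennreal v * emeasure lborel E \<le> ennreal u * emeasure lborel E"
    using E by (simp add: emeasure_density_const nn_integral_cmult_indicator)
  then show ?thesis
    unfolding E_def[symmetric] using E emeasure_lborel_subset_finite[OF E(2)] \<open>0 < u\<close> \<open>u < v\<close>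
    by (intro null_sets_if_scaled_emeasure_le[where u = u and v = v]) auto
qed

lemma null_sets_frequently_avg_below:
  assumes F: "integrable lborel F" "\<And>t. 0 \<le> F t" and "0 < u" "u < v"
  shows "{x\<in>{0<..T}. v < F x \<and> (\<exists>\<^sub>F n in sequentially. cell_avg F n x < u)} \<in> null_sets lborel"
proof -
  define E where "E = {x\<in>{0<..T}. v < F x \<and> (\<exists>\<^sub>F n in sequentially. cell_avg F n x < u)}"
  have [measurable]: "F \<in> borel_measurable borel"
    using F(1) by auto
  have E: "E \<in> sets borel" "E \<subseteq> {0<..T}"
    unfolding E_def frequently_def by measurable auto
  let ?\<nu> = "density lborel (\<lambda>t. ennreal u * indicator {0..T} t)"
  have "ennreal v * emeasure lborel E = (\<integral>\<^sup>+t. ennreal v * indicator E t \<partial>lborel)"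
    using E by (simp add: nn_integral_cmult_indicator)
  also have "\<dots> \<le> (\<integral>\<^sup>+t. ennreal (F t) * indicator E t \<partial>lborel)"
    by (intro nn_integral_mono) (auto simp: E_def split: split_indicator intro: ennreal_leI)
  also have "\<dots> = emeasure (density lborel (\<lambda>t. ennreal (F t))) E"
    using E by (intro emeasure_density[symmetric]) auto
  also have "\<dots> \<le> emeasure ?\<nu> E"
  proof (rule emeasure_le_of_frequently_cells[OF _ _ _ E])
    have "emeasure ?\<nu> UNIV = (\<integral>\<^sup>+t. ennreal u * indicator {0..T} t \<partial>lborel)"
      by (simp add: emeasure_density)
    then show "emeasure ?\<nu> (space ?\<nu>) \<noteq> \<infinity>"
      using T_pos by (simp add: nn_integral_cmult_indicator ennreal_mult_eq_top_iff)
    fix x assume "x \<in> E"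
    then have x: "x \<in> {0<..T}" and freq: "\<exists>\<^sub>F n in sequentially. cell_avg F n x < u"
      by (auto simp: E_def)
    show "\<exists>\<^sub>F n in sequentially. emeasure (density lborel (\<lambda>t. ennreal (F t))) (cell_of n x)
        \<le> emeasure ?\<nu> (cell_of n x)"
      using freq
    proof (rule frequently_elim1)
      fix n assume "cell_avg F n x < u"
      moreover have "cell_of n x \<subseteq> {0..T}"
        using cell_subset[OF cell_index(1)[OF x, of n]] by auto
      ultimately show "emeasure (density lborel (\<lambda>t. ennreal (F t))) (cell_of n x)
          \<le> emeasure ?\<nu> (cell_of n x)"
        by (simp add: emeasure_density_const_on emeasure_density_cell_of[OF F x])
          (intro mult_right_mono ennreal_leI, auto)
    qed
  qed simp_all
  also have "\<dots> = ennreal u * emeasure lborel E"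
    using E by (intro emeasure_density_const_on) auto
  finally show ?thesis
    unfolding E_def[symmetric] using E emeasure_lborel_subset_finite[OF E(2)] \<open>0 < u\<close> \<open>u < v\<close>
    by (intro null_sets_if_scaled_emeasure_le[where u = u and v = v]) auto
qed

theorem cell_avg_tendsto_AE:
  assumes F: "integrable lborel F" "\<And>t. 0 \<le> F t"
  shows "AE x in lborel. x \<in> {0<..T} \<longrightarrow> (\<lambda>n. cell_avg F n x) \<longlonglongrightarrow> F x"
proof (rule AE_I')
  let ?gaps = "{(u, v). u \<in> \<rat> \<and> v \<in> \<rat> \<and> 0 < u \<and> u < v}"
  let ?N = "\<lambda>(u, v). {x\<in>{0<..T}. F x < u \<and> (\<exists>\<^sub>F n in sequentially. v < cell_avg F n x)} \<union>
    {x\<in>{0<..T}. v < F x \<and> (\<exists>\<^sub>F n in sequentially. cell_avg F n x < u)}"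
  have "countable ?gaps"
    by (rule countable_subset[OF _ countable_SIGMA[OF countable_rat countable_rat]]) auto
  then show "(\<Union>p\<in>?gaps. ?N p) \<in> null_sets lborel"
    using null_sets_frequently_avg_above[OF F] null_sets_frequently_avg_below[OF F]
    by (intro null_sets_UN') auto
  show "{x \<in> space lborel. \<not> (x \<in> {0<..T} \<longrightarrow> (\<lambda>n. cell_avg F n x) \<longlonglongrightarrow> F x)} \<subseteq> (\<Union>p\<in>?gaps. ?N p)"
  proof (rule subsetI)
    fix x assume "x \<in> {x \<in> space lborel. \<not> (x \<in> {0<..T} \<longrightarrow> (\<lambda>n. cell_avg F n x) \<longlonglongrightarrow> F x)}"
    then have "x \<in> {0<..T}" "\<not> (\<lambda>n. cell_avg F n x) \<longlonglongrightarrow> F x"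
      by auto
    then show "x \<in> (\<Union>p\<in>?gaps. ?N p)"
      using not_tendsto_rational_gap[of "\<lambda>n. cell_avg F n x" "F x"] cell_avg_nonneg[OF F(2)] F(2)
      by fastforce
  qed
qed

corollary cell_avg_tendsto_AE_on:
  assumes F: "set_integrable lborel {0..T} F" "\<And>t. t \<in> {0..T} \<Longrightarrow> 0 \<le> F t"
  shows "AE x in lborel. x \<in> {0<..T} \<longrightarrow> (\<lambda>n. cell_avg F n x) \<longlonglongrightarrow> F x"
proof -
  have "AE x in lborel. x \<in> {0<..T} \<longrightarrow>
      (\<lambda>n. cell_avg (\<lambda>t. indicator {0..T} t * F t) n x) \<longlonglongrightarrow> indicator {0..T} x * F x"
    using F unfolding set_integrable_def by (intro cell_avg_tendsto_AE) (auto split: split_indicator)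
  moreover have "cell_avg (\<lambda>t. indicator {0..T} t * F t) n x = cell_avg F n x" for n x
    by (rule cell_avg_cong) simp
  ultimately show ?thesis
    by simp
qed

end

section \<open>Convergence of the score for a fixed configuration\<close>

locale good_configuration = dissecting_system +
  fixes lam :: "real \<Rightarrow> real list \<Rightarrow> real" and \<phi> :: "real set"
  assumes intensity: "conditional_intensity T lam"
    and finite_config: "finite \<phi>" and config_subset: "\<phi> \<subseteq> {0<..T}"
    and lower_ends_not_in_config: "\<And>n i. a n i \<notin> \<phi>"
    and cell_avg_tendsto_intensity:
      "\<And>t. t \<in> \<phi> \<Longrightarrow> (\<lambda>n. cell_avg (\<lambda>s. lam s (hist \<phi> t)) n t) \<longlonglongrightarrow> lam t (hist \<phi> t)"
begin

lemma lam_hist_nonneg: "0 \<le> lam t (hist \<phi> u)"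
  using intensity by (simp add: conditional_intensity_def hist_def)

lemma lam_sorted_integrable:
  assumes "X \<subseteq> \<phi>"
  shows "set_integrable lborel {0..T} (\<lambda>t. lam t (sorted_list_of_set X))"
proof -
  have "finite X"
    using assms finite_config by (rule finite_subset)
  then have "sorted_wrt (<) (sorted_list_of_set X)" "set (sorted_list_of_set X) \<subseteq> {0..T}"
    using assms config_subset by auto
  then show ?thesis
    using intensity unfolding conditional_intensity_def by blast
qed

definition lam_star :: "real \<Rightarrow> real" where
  "lam_star u = lam u (hist \<phi> u)"

lemma lam_star_integrable: "set_integrable lborel {0..T} lam_star"
proof -
  let ?past = "\<lambda>X. {u. {s \<in> \<phi>. s < u} = X}"
  have past_sets: "?past X \<in> sets borel" if "X \<subseteq> \<phi>" for X
  proof -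
    have "?past X = {u. \<forall>s\<in>\<phi>. s < u \<longleftrightarrow> s \<in> X}"
      using that by auto
    also have "\<dots> \<in> sets borel"
      using finite_config by measurable
    finally show ?thesis .
  qed
  have "indicator {0..T} u *\<^sub>R lam_star u =
      (\<Sum>X\<in>Pow \<phi>. indicator (?past X) u *\<^sub>R (indicator {0..T} u *\<^sub>R lam u (sorted_list_of_set X)))" for u
    using finite_config
    by (simp add: lam_star_def hist_def indicator_def if_distrib[of "\<lambda>c. c * _"] sum.delta'
        cong: if_cong)
  moreover have "integrable lborel (\<lambda>u. \<Sum>X\<in>Pow \<phi>.
      indicator (?past X) u *\<^sub>R (indicator {0..T} u *\<^sub>R lam u (sorted_list_of_set X)))"
  proof (rule Bochner_Integration.integrable_sum)
    fix X assume "X \<in> Pow \<phi>"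
    then show "integrable lborel
        (\<lambda>u. indicator (?past X) u *\<^sub>R (indicator {0..T} u *\<^sub>R lam u (sorted_list_of_set X)))"
      using past_sets[of X] lam_sorted_integrable[of X] unfolding set_integrable_def
      by (intro integrable_mult_indicator[where A = "?past X"]) auto
  qed
  ultimately show ?thesis
    unfolding set_integrable_def by simp
qed

lemma hist_on_empty_cell:
  assumes "\<phi> \<inter> cell n i = {}" "u \<in> cell n i"
  shows "hist \<phi> u = hist \<phi> (a n i)"
  using assms lower_ends_not_in_config[of n i]
  by (intro hist_eq_if_no_points_between[OF finite_config]) (auto simp: order.order_iff_strict)

definition separates :: "nat \<Rightarrow> bool" where
  "separates n \<longleftrightarrow> (\<forall>t\<in>\<phi>. \<phi> \<inter> cell_of n t = {t})"

lemma eventually_separates: "\<forall>\<^sub>F n in sequentially. separates n"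
proof -
  have "\<forall>\<^sub>F n in sequentially. s \<notin> cell_of n t" if "t \<in> \<phi>" "s \<in> \<phi> - {t}" for s t
    using that config_subset by (intro eventually_not_in_cell_of) auto
  then have "\<forall>\<^sub>F n in sequentially. \<forall>t\<in>\<phi>. \<forall>s\<in>\<phi> - {t}. s \<notin> cell_of n t"
    using finite_config by (simp add: eventually_ball_finite)
  then show ?thesis
  proof eventually_elim
    case (elim n)
    have "t \<in> cell_of n t" if "t \<in> \<phi>" for t
      using cell_index(2) that config_subset by blast
    with elim show ?case
      unfolding separates_def by blast
  qed
qed

lemma hist_cell_lb:
  assumes sep: "separates n" and t: "t \<in> \<phi>"
  shows "hist \<phi> (cell_lb n t) = hist \<phi> t"
proof -
  have "t \<in> {0<..T}"
    using t config_subset by blast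
  then have t_cell: "t \<in> cell_of n t"
    by (rule cell_index(2))
  have "t \<le> s" if s: "s \<in> \<phi>" "cell_lb n t \<le> s" for s
  proof (cases "s \<le> cell_ub n t")
    case True
    have "s \<noteq> cell_lb n t"
      using s(1) lower_ends_not_in_config by metis
    with s True have "s \<in> \<phi> \<inter> cell_of n t"
      by auto
    then show ?thesis
      using sep t unfolding separates_def by auto
  next
    case False
    then show ?thesis
      using t_cell by auto
  qed
  then show ?thesis
    using t_cell by (intro hist_eq_if_no_points_between[OF finite_config, symmetric]) auto
qed

lemma sum_cells_split:
  assumes "separates n"
  shows "(\<Sum>i<k n. f i) = (\<Sum>i\<in>{i. i < k n \<and> \<phi> \<inter> cell n i = {}}. f i) + (\<Sum>t\<in>\<phi>. f (cell_index n t))"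
proof -
  have t: "cell_index n t < k n" "t \<in> cell n (cell_index n t)" if "t \<in> \<phi>" for t
    using cell_index that config_subset by blast+
  have inj: "inj_on (cell_index n) \<phi>"
  proof (rule inj_onI)
    fix s t assume st: "s \<in> \<phi>" "t \<in> \<phi>" "cell_index n s = cell_index n t"
    then have "s \<in> \<phi> \<inter> cell_of n t"
      using t(2)[of s] by simp
    then show "s = t"
      using assms st(2) unfolding separates_def by blast
  qed
  have occupied: "{i. i < k n \<and> \<phi> \<inter> cell n i \<noteq> {}} = cell_index n ` \<phi>"
  proof (intro subset_antisym subsetI)
    fix i assume "i \<in> {i. i < k n \<and> \<phi> \<inter> cell n i \<noteq> {}}"
    then obtain s where "i < k n" "s \<in> \<phi>" "s \<in> cell n i"
      by blast
    then show "i \<in> cell_index n ` \<phi>"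
      using cell_index_eq by blast
  next
    fix i assume "i \<in> cell_index n ` \<phi>"
    then show "i \<in> {i. i < k n \<and> \<phi> \<inter> cell n i \<noteq> {}}"
      using t by blast
  qed
  have "{..<k n} = {i. i < k n \<and> \<phi> \<inter> cell n i = {}} \<union> cell_index n ` \<phi>"
    using occupied by blast
  moreover have "{i. i < k n \<and> \<phi> \<inter> cell n i = {}} \<inter> cell_index n ` \<phi> = {}"
    using occupied by blast
  ultimately show ?thesis
    using finite_config sum.reindex[OF inj, of f] by (simp add: sum.union_disjoint)
qed

definition cell_compensator :: "nat \<Rightarrow> nat \<Rightarrow> real" where
  "cell_compensator n i = (\<integral>t\<in>{a n i..b n i}. lam t (hist \<phi> (a n i)) \<partial>lborel)"

lemma cell_compensator_empty_cell:
  assumes "\<phi> \<inter> cell n i = {}"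
  shows "cell_compensator n i = (\<integral>t\<in>{a n i..b n i}. lam_star t \<partial>lborel)"
proof -
  have "cell_compensator n i = (\<integral>t\<in>cell n i. lam t (hist \<phi> (a n i)) \<partial>lborel)"
    unfolding cell_compensator_def
    by (rule set_integral_discrete_difference[where X = "{a n i}"]) auto
  also have "\<dots> = (\<integral>t\<in>cell n i. lam_star t \<partial>lborel)"
    using hist_on_empty_cell[OF assms] by (intro set_lebesgue_integral_cong) (auto simp: lam_star_def)
  also have "\<dots> = (\<integral>t\<in>{a n i..b n i}. lam_star t \<partial>lborel)"
    by (rule set_integral_discrete_difference[where X = "{a n i}"]) auto
  finally show ?thesis .
qed

definition normalized_interval_score :: "nat \<Rightarrow> ereal" where
  "normalized_interval_score n =
     S_int (k n) (a n) (b n) (\<lambda>i. p_int lam \<phi> (a n i) (b n i)) \<phi>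
     + ereal (\<Sum>i<k n. if card (\<phi> \<inter> cell n i) > 0 then ln (b n i - a n i) else 0)"

lemma normalized_interval_score_cells:
  "normalized_interval_score n = (\<Sum>i<k n. if \<phi> \<inter> cell n i = {} then ereal (cell_compensator n i)
     else nlog (1 - exp (- cell_compensator n i)) + ereal (ln (b n i - a n i)))"
  unfolding normalized_interval_score_def S_int_def sum_ereal[symmetric] sum.distrib[symmetric]
  using finite_config
  by (intro sum.cong) (auto simp: card_gt_0_iff p_int_def cell_compensator_def nlog_def)

definition point_score :: "nat \<Rightarrow> real \<Rightarrow> ereal" where
  "point_score n t = nlog (1 - exp (- cell_compensator n (cell_index n t)))
     + ereal (ln (cell_ub n t - cell_lb n t) - (\<integral>s\<in>{cell_lb n t..cell_ub n t}. lam_star s \<partial>lborel))"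

lemma normalized_interval_score_decomposition:
  assumes sep: "separates n"
  shows "normalized_interval_score n = (\<Sum>t\<in>\<phi>. point_score n t) + ereal (\<integral>s\<in>{0..T}. lam_star s \<partial>lborel)"
proof -
  let ?E = "{i. i < k n \<and> \<phi> \<inter> cell n i = {}}"
  let ?J = "\<lambda>t. \<integral>s\<in>{cell_lb n t..cell_ub n t}. lam_star s \<partial>lborel"
  let ?X = "\<Sum>t\<in>\<phi>. nlog (1 - exp (- cell_compensator n (cell_index n t)))"
  have occupied: "\<phi> \<inter> cell_of n t \<noteq> {}" if "t \<in> \<phi>" for t
    using sep that unfolding separates_def by blast
  have "normalized_interval_score n = ereal (\<Sum>i\<in>?E. \<integral>s\<in>{a n i..b n i}. lam_star s \<partial>lborel)
      + (?X + ereal (\<Sum>t\<in>\<phi>. ln (cell_ub n t - cell_lb n t)))"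
    unfolding normalized_interval_score_cells sum_cells_split[OF sep]
    using occupied by (simp add: cell_compensator_empty_cell sum.distrib)
  moreover have "(\<integral>s\<in>{0..T}. lam_star s \<partial>lborel)
      = (\<Sum>i\<in>?E. \<integral>s\<in>{a n i..b n i}. lam_star s \<partial>lborel) + (\<Sum>t\<in>\<phi>. ?J t)"
    unfolding set_integral_partition[OF lam_star_integrable, of n] sum_cells_split[OF sep] ..
  moreover have "(\<Sum>t\<in>\<phi>. point_score n t) = ?X + ereal (\<Sum>t\<in>\<phi>. ln (cell_ub n t - cell_lb n t) - ?J t)"
    by (simp add: point_score_def sum.distrib)
  moreover have "?X \<noteq> -\<infinity>"
    by (intro sum_ereal_not_MInfty) (simp add: nlog_def)
  ultimately show ?thesis
    by (cases ?X) (simp_all add: sum_subtractf)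
qed

lemma point_score_tendsto:
  assumes t: "t \<in> \<phi>"
  shows "(\<lambda>n. point_score n t) \<longlonglongrightarrow> nlog (lam t (hist \<phi> t))"
proof -
  have t0: "t \<in> {0<..T}"
    using t config_subset by blast
  define I where "I n = (\<integral>s\<in>{cell_lb n t..cell_ub n t}. lam s (hist \<phi> t) \<partial>lborel)" for n
  have "(\<lambda>n. nlog (1 - exp (- I n)) + ereal (ln (cell_ub n t - cell_lb n t)
      - (\<integral>s\<in>{cell_lb n t..cell_ub n t}. lam_star s \<partial>lborel))) \<longlonglongrightarrow> nlog (lam t (hist \<phi> t))"
  proof (rule tendsto_nlog_interval_score)
    show "0 < cell_ub n t - cell_lb n t" for n
      using cell_lb_less_ub[OF t0] by simp
    show "(\<lambda>n. cell_ub n t - cell_lb n t) \<longlonglongrightarrow> 0"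
      using tendsto_diff[OF cell_bounds_tendsto(2,1)[OF t0]] by simp
    show "(\<lambda>n. I n / (cell_ub n t - cell_lb n t)) \<longlonglongrightarrow> lam t (hist \<phi> t)"
      using cell_avg_tendsto_intensity[OF t] by (simp add: cell_avg_eq[OF t0] I_def)
    show "0 \<le> I n" for n
      unfolding I_def set_lebesgue_integral_def
      by (intro Bochner_Integration.integral_nonneg) (simp add: lam_hist_nonneg)
    show "(\<lambda>n. \<integral>s\<in>{cell_lb n t..cell_ub n t}. lam_star s \<partial>lborel) \<longlonglongrightarrow> 0"
      by (rule cell_integral_tendsto_0[OF lam_star_integrable t0])
  qed (rule lam_hist_nonneg)
  moreover have "\<forall>\<^sub>F n in sequentially. I n = cell_compensator n (cell_index n t)"
    using eventually_separates by eventually_elim (simp add: I_def cell_compensator_def hist_cell_lb t)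
  ultimately show ?thesis
    unfolding point_score_def by (rule Lim_transform_eventually[OF _ eventually_mono]) simp
qed

theorem normalized_interval_score_tendsto: "normalized_interval_score \<longlonglongrightarrow> S_ll T lam \<phi>"
proof -
  have "(\<lambda>n. (\<Sum>t\<in>\<phi>. point_score n t) + ereal (\<integral>s\<in>{0..T}. lam_star s \<partial>lborel))
      \<longlonglongrightarrow> (\<Sum>t\<in>\<phi>. nlog (lam t (hist \<phi> t))) + ereal (\<integral>s\<in>{0..T}. lam_star s \<partial>lborel)"
    using finite_config point_score_tendsto
    by (intro tendsto_add_ereal_nonneg tendsto_sum_ereal_not_MInfty sum_ereal_not_MInfty)
      (auto simp: nlog_def)
  moreover have "\<forall>\<^sub>F n in sequentially. (\<Sum>t\<in>\<phi>. point_score n t) + ereal (\<integral>s\<in>{0..T}. lam_star s \<partial>lborel)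
      = normalized_interval_score n"
    using eventually_separates by eventually_elim (simp add: normalized_interval_score_decomposition)
  ultimately show ?thesis
    unfolding S_ll_def lam_star_def by (rule Lim_transform_eventually)
qed

end

section \<open>Almost every Poisson configuration is good\<close>

locale dissecting_intensity = dissecting_system +
  fixes lam :: "real \<Rightarrow> real list \<Rightarrow> real"
  assumes intensity: "conditional_intensity T lam"
begin

definition exceptional :: "real set" where
  "exceptional = - {0<..T} \<union> (\<Union>n. \<Union>i. {a n i})"

lemma exceptional_sets[measurable]: "exceptional \<in> sets borel"
  unfolding exceptional_def by (intro sets.Un sets.countable_UN' sets.compl_sets) auto

lemma AE_not_exceptional: "AE u in lborel. u \<in> {0..T} \<longrightarrow> u \<notin> exceptional"
proof -
  have "countable ({0} \<union> (\<Union>n. \<Union>i. {a n i}))"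
    by auto
  then have "AE u in lborel. u \<notin> {0} \<union> (\<Union>n. \<Union>i. {a n i})"
    by (intro AE_not_in countable_imp_null_set_lborel)
  then show ?thesis
    by eventually_elim (auto simp: exceptional_def)
qed

text \<open>The intensity given the history \<open>z 0 < \<dots> < z (j - 1)\<close>, in the form for which
  \<^const>\<open>conditional_intensity\<close> asserts joint measurability.\<close>

definition hist_intensity :: "nat \<Rightarrow> real \<Rightarrow> (nat \<Rightarrow> real) \<Rightarrow> real" where
  "hist_intensity j t z = (if sorted_wrt (<) (map z [0..<j]) then lam t (map z [0..<j]) else 0)"

definition regular_point :: "nat \<Rightarrow> real \<Rightarrow> (nat \<Rightarrow> real) \<Rightarrow> bool" where
  "regular_point j u z \<longleftrightarrow>
     u \<notin> exceptional \<and> (\<lambda>n. cell_avg (\<lambda>s. hist_intensity j s z) n u) \<longlonglongrightarrow> hist_intensity j u z"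

abbreviation history_space :: "nat \<Rightarrow> (real \<times> (nat \<Rightarrow> real)) measure" where
  "history_space j \<equiv> lborel \<Otimes>\<^sub>M (\<Pi>\<^sub>M l\<in>{..<j}. lborel)"

lemma sets_regular_point:
  "{p \<in> space (history_space j). regular_point j (fst p) (snd p)} \<in> sets (history_space j)"
proof -
  let ?H = "borel \<Otimes>\<^sub>M (\<Pi>\<^sub>M l\<in>{..<j}. borel) :: (real \<times> (nat \<Rightarrow> real)) measure"
  have sets_eq: "sets (history_space j) = sets ?H"
    by (intro sets_pair_measure_cong sets_PiM_cong) auto
  have [measurable]: "case_prod (hist_intensity j) \<in> borel_measurable ?H"
    using intensity measurable_cong_sets[OF sets_eq refl]
    unfolding conditional_intensity_def hist_intensity_def by blast
  then have [measurable]: "case_prod (\<lambda>z t. hist_intensity j t z)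
      \<in> borel_measurable ((\<Pi>\<^sub>M l\<in>{..<j}. borel) \<Otimes>\<^sub>M borel)"
    by (subst measurable_pair_swap_iff) simp
  have "{p \<in> space ?H. regular_point j (fst p) (snd p)} \<in> sets ?H"
    unfolding regular_point_def cell_avg_def set_lebesgue_integral_def by measurable
  then show ?thesis
    using sets_eq sets_eq_imp_space_eq[OF sets_eq] by simp
qed

lemma AE_regular_point:
  assumes "sorted_wrt (<) (map z [0..<j])" "set (map z [0..<j]) \<subseteq> {0..T}"
  shows "AE u in uniform_measure lborel {0..T}. regular_point j u z"
proof (rule AE_uniform_measureI)
  have hist: "hist_intensity j s z = lam s (map z [0..<j])" for s
    using assms(1) by (simp add: hist_intensity_def)
  have "AE u in lborel. u \<in> {0<..T} \<longrightarrow>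
      (\<lambda>n. cell_avg (\<lambda>s. lam s (map z [0..<j])) n u) \<longlonglongrightarrow> lam u (map z [0..<j])"
    using intensity assms unfolding conditional_intensity_def by (intro cell_avg_tendsto_AE_on) auto
  then show "AE u in lborel. u \<in> {0..T} \<longrightarrow> regular_point j u z"
    using AE_not_exceptional by eventually_elim (auto simp: regular_point_def exceptional_def hist)
qed simp

definition irregular_configs :: "real set set" where
  "irregular_configs = {\<phi> \<in> space (config_space T).
     \<exists>j<card \<phi>. \<not> regular_point j (nth_point j \<phi>) (\<lambda>l\<in>{..<j}. nth_point l \<phi>)}"

lemma sets_irregular_configs: "irregular_configs \<in> sets (config_space T)"
proof -
  let ?z = "\<lambda>j \<phi>. (nth_point j \<phi>, \<lambda>l\<in>{..<j}. nth_point l \<phi>)"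
  have z: "?z j \<in> measurable (config_space T) (history_space j)" for j
    by (intro measurable_Pair measurable_restrict) (simp_all add: borel_measurable_nth_point)
  let ?R = "\<lambda>j. {p \<in> space (history_space j). regular_point j (fst p) (snd p)}"
  have count: "{\<phi> \<in> space (config_space T). j < card \<phi>} \<in> sets (config_space T)" for j
    using sets_config_space_count_greater[where S = UNIV and j = j and T = T] by simp
  have irregular: "?z j -` (space (history_space j) - ?R j) \<inter> space (config_space T) \<in> sets (config_space T)" for j
    using sets_regular_point by (intro measurable_sets[OF z] sets.Diff sets.top)
  have "irregular_configs = (\<Union>j. {\<phi> \<in> space (config_space T). j < card \<phi>} \<inter>
      (?z j -` (space (history_space j) - ?R j) \<inter> space (config_space T)))"
    using measurable_space[OF z] by (auto simp: irregular_configs_def)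
  also have "\<dots> \<in> sets (config_space T)"
    by (rule sets.countable_UN) (blast intro: sets.Int count irregular)
  finally show ?thesis .
qed

lemma hist_intensity_nth_point:
  assumes "finite \<phi>" "j < card \<phi>"
  shows "hist_intensity j s (\<lambda>l\<in>{..<j}. nth_point l \<phi>) = lam s (hist \<phi> (nth_point j \<phi>))"
proof -
  have "map (\<lambda>l\<in>{..<j}. nth_point l \<phi>) [0..<j] = take j (sorted_list_of_set \<phi>)"
    using assms(2) by (intro nth_equalityI) (auto simp: nth_point_def)
  moreover have "sorted_wrt (<) (take j (sorted_list_of_set \<phi>))"
    by (intro sorted_wrt_take) simp
  ultimately show ?thesis
    using hist_nth_sorted_list_of_set[OF assms] assms(2)
    by (simp add: hist_intensity_def nth_point_def)
qed

lemma good_configuration_if_regular: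
  assumes \<phi>: "\<phi> \<in> space (config_space T)" "\<phi> \<notin> irregular_configs"
  shows "good_configuration T k a b lam \<phi>"
proof -
  have fin: "finite \<phi>"
    using \<phi>(1) by (simp add: space_config_space)
  have regular: "t \<notin> exceptional \<and>
      (\<lambda>n. cell_avg (\<lambda>s. lam s (hist \<phi> t)) n t) \<longlonglongrightarrow> lam t (hist \<phi> t)" if t: "t \<in> \<phi>" for t
  proof -
    have "t \<in> set (sorted_list_of_set \<phi>)"
      using t fin by simp
    then obtain j where j: "j < card \<phi>" "t = nth_point j \<phi>"
      by (auto simp: in_set_conv_nth nth_point_def)
    then have "regular_point j t (\<lambda>l\<in>{..<j}. nth_point l \<phi>)"
      using \<phi> by (auto simp: irregular_configs_def)
    then show ?thesis
      using j hist_intensity_nth_point[OF fin j(1)] by (simp add: regular_point_def)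
  qed
  show ?thesis
  proof
    show "conditional_intensity T lam" "finite \<phi>"
      by (fact intensity, fact fin)
    show "\<phi> \<subseteq> {0<..T}" "a n i \<notin> \<phi>" for n i
      using regular by (auto simp: exceptional_def)
    show "(\<lambda>n. cell_avg (\<lambda>s. lam s (hist \<phi> t)) n t) \<longlonglongrightarrow> lam t (hist \<phi> t)" if "t \<in> \<phi>" for t
      using regular[OF that] by blast
  qed
qed

abbreviation uniform_points :: "(nat \<Rightarrow> real) measure" where
  "uniform_points \<equiv> \<Pi>\<^sub>M i\<in>UNIV. uniform_measure lborel {0..T}"

lemma prob_space_uniform: "prob_space (uniform_measure lborel {0..T})"
  using T_pos by (intro prob_space_uniform_measure) auto

text \<open>The histories are formed from coordinates other than \<open>i\<close>, hence are independent of
  the \<open>i\<close>-th sample point.\<close>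

definition irregular_coordinate :: "nat \<Rightarrow> (nat \<Rightarrow> real) set" where
  "irregular_coordinate i = {x \<in> space uniform_points. \<exists>\<sigma>. i \<notin> set \<sigma> \<and>
     sorted_wrt (<) (map x \<sigma>) \<and> set (map x \<sigma>) \<subseteq> {0..T} \<and>
     \<not> regular_point (length \<sigma>) (x i) (\<lambda>l\<in>{..<length \<sigma>}. x (\<sigma> ! l))}"

lemma sets_irregular_coordinate: "irregular_coordinate i \<in> sets uniform_points"
proof -
  have coord[measurable]: "(\<lambda>x. x l) \<in> borel_measurable uniform_points" for l
    using measurable_component_singleton[of l UNIV "\<lambda>_. uniform_measure lborel {0..T}"]
    by (simp add: measurable_cong_sets[OF sets_uniform_measure refl])
  have ordered: "{x \<in> space uniform_points. sorted_wrt (<) (map x \<sigma>) \<and> set (map x \<sigma>) \<subseteq> {0..T}}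
      \<in> sets uniform_points" for \<sigma> :: "nat list"
  proof -
    have "{x \<in> space uniform_points. sorted_wrt (<) (map x \<sigma>) \<and> set (map x \<sigma>) \<subseteq> {0..T}} =
        {x \<in> space uniform_points. (\<forall>p<length \<sigma>. \<forall>q<length \<sigma>. p < q \<longrightarrow> x (\<sigma> ! p) < x (\<sigma> ! q)) \<and>
          (\<forall>p<length \<sigma>. x (\<sigma> ! p) \<in> {0..T})}"
      by (auto simp: sorted_wrt_iff_nth_less image_subset_iff set_conv_nth)
    also have "\<dots> \<in> sets uniform_points"
      by measurable
    finally show ?thesis .
  qed
  have regular: "{x \<in> space uniform_points. regular_point (length \<sigma>) (x i) (\<lambda>l\<in>{..<length \<sigma>}. x (\<sigma> ! l))}
      \<in> sets uniform_points" for \<sigma> :: "nat list"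
  proof -
    have z: "(\<lambda>x. (x i, \<lambda>l\<in>{..<length \<sigma>}. x (\<sigma> ! l))) \<in> measurable uniform_points (history_space (length \<sigma>))"
      by (intro measurable_Pair measurable_restrict) (simp_all add: measurable_lborel2)
    have "{x \<in> space uniform_points. regular_point (length \<sigma>) (x i) (\<lambda>l\<in>{..<length \<sigma>}. x (\<sigma> ! l))} =
        (\<lambda>x. (x i, \<lambda>l\<in>{..<length \<sigma>}. x (\<sigma> ! l))) -`
          {p \<in> space (history_space (length \<sigma>)). regular_point (length \<sigma>) (fst p) (snd p)}
        \<inter> space uniform_points"
      using measurable_space[OF z] by auto
    also have "\<dots> \<in> sets uniform_points"
      by (rule measurable_sets[OF z sets_regular_point])
    finally show ?thesis .
  qed
  have "irregular_coordinate i = (\<Union>\<sigma>\<in>{\<sigma>. i \<notin> set \<sigma>}.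
      {x \<in> space uniform_points. sorted_wrt (<) (map x \<sigma>) \<and> set (map x \<sigma>) \<subseteq> {0..T}} -
      {x \<in> space uniform_points. regular_point (length \<sigma>) (x i) (\<lambda>l\<in>{..<length \<sigma>}. x (\<sigma> ! l))})"
    unfolding irregular_coordinate_def by blast
  also have "\<dots> \<in> sets uniform_points"
    using ordered regular by (intro sets.countable_UN' sets.Diff) auto
  finally show ?thesis .
qed

lemma null_irregular_coordinate: "irregular_coordinate i \<in> null_sets uniform_points"
proof (rule null_sets_PiM_if_AE_fun_upd[OF prob_space_uniform sets_irregular_coordinate])
  fix X :: "nat \<Rightarrow> real"
  have "AE u in uniform_measure lborel {0..T}. \<forall>\<sigma>.
      i \<notin> set \<sigma> \<and> sorted_wrt (<) (map X \<sigma>) \<and> set (map X \<sigma>) \<subseteq> {0..T} \<longrightarrow>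
      regular_point (length \<sigma>) u (\<lambda>l\<in>{..<length \<sigma>}. X (\<sigma> ! l))"
    unfolding AE_all_countable
  proof
    fix \<sigma> :: "nat list"
    have "map (\<lambda>l\<in>{..<length \<sigma>}. X (\<sigma> ! l)) [0..<length \<sigma>] = map X \<sigma>"
      by (rule nth_equalityI) auto
    then show "AE u in uniform_measure lborel {0..T}.
        i \<notin> set \<sigma> \<and> sorted_wrt (<) (map X \<sigma>) \<and> set (map X \<sigma>) \<subseteq> {0..T} \<longrightarrow>
        regular_point (length \<sigma>) u (\<lambda>l\<in>{..<length \<sigma>}. X (\<sigma> ! l))"
      using AE_regular_point[of "\<lambda>l\<in>{..<length \<sigma>}. X (\<sigma> ! l)" "length \<sigma>"]
      by (cases "sorted_wrt (<) (map X \<sigma>) \<and> set (map X \<sigma>) \<subseteq> {0..T}") auto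
  qed
  then show "AE u in uniform_measure lborel {0..T}. X(i := u) \<notin> irregular_coordinate i"
  proof eventually_elim
    case (elim u)
    show ?case
    proof
      assume "X(i := u) \<in> irregular_coordinate i"
      then obtain \<sigma> where \<sigma>: "i \<notin> set \<sigma>" "sorted_wrt (<) (map (X(i := u)) \<sigma>)"
        "set (map (X(i := u)) \<sigma>) \<subseteq> {0..T}"
        "\<not> regular_point (length \<sigma>) u (\<lambda>l\<in>{..<length \<sigma>}. (X(i := u)) (\<sigma> ! l))"
        unfolding irregular_coordinate_def by (simp only: mem_Collect_eq fun_upd_same) blast
      have "map (X(i := u)) \<sigma> = map X \<sigma>"
        "(\<lambda>l\<in>{..<length \<sigma>}. (X(i := u)) (\<sigma> ! l)) = (\<lambda>l\<in>{..<length \<sigma>}. X (\<sigma> ! l))"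
        using \<sigma>(1) by (auto intro!: restrict_ext dest: nth_mem)
      then show False
        using elim \<sigma> by simp
    qed
  qed
qed

lemma irregular_coordinate_if_irregular_config:
  assumes x: "x \<in> space uniform_points" and irregular: "x ` {..<N} \<in> irregular_configs"
  shows "\<exists>i<N. x \<in> irregular_coordinate i"
proof -
  define \<phi> where "\<phi> = x ` {..<N}"
  define xs where "xs = sorted_list_of_set \<phi>"
  have xs: "sorted_wrt (<) xs" "set xs = \<phi>" "length xs = card \<phi>"
    by (simp_all add: xs_def \<phi>_def)
  obtain j where j: "j < card \<phi>"
    and not_regular: "\<not> regular_point j (nth_point j \<phi>) (\<lambda>l\<in>{..<j}. nth_point l \<phi>)"
    using irregular unfolding irregular_configs_def \<phi>_def by blast
  obtain i where i: "i < N" "x i = xs ! j"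
    using j xs nth_mem[of j xs] unfolding \<phi>_def by (metis imageE lessThan_iff)
  \<comment> \<open>the history of the \<open>j\<close>-th point, as a list of sample indices\<close>
  define \<sigma> where "\<sigma> = map (inv_into {..<N} x) (take j xs)"
  have x_\<sigma>: "map x \<sigma> = take j xs"
    unfolding \<sigma>_def using xs(2) by (intro map_inv_into_eq) (auto simp: \<phi>_def dest: in_set_takeD)
  have length_\<sigma>: "length \<sigma> = j"
    using j xs(3) by (simp add: \<sigma>_def)
  have "i \<notin> set \<sigma>"
    using j xs(3) by (intro notin_set_if_map_eq_take[OF xs(1) _ x_\<sigma> i(2)]) simp
  moreover have "sorted_wrt (<) (map x \<sigma>)" "set (map x \<sigma>) \<subseteq> {0..T}"
    using xs irregular unfolding x_\<sigma>
    by (auto simp: irregular_configs_def space_config_space \<phi>_def dest: in_set_takeD intro: sorted_wrt_take)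
  moreover have "(\<lambda>l\<in>{..<length \<sigma>}. x (\<sigma> ! l)) = (\<lambda>l\<in>{..<j}. nth_point l \<phi>)"
    using x_\<sigma> j by (intro restrict_nth_point_eq) (simp_all add: xs_def)
  ultimately have "x \<in> irregular_coordinate i"
    using x not_regular i(2) j xs(3) length_\<sigma> by (auto simp: irregular_coordinate_def nth_point_def xs_def)
  then show ?thesis
    using i(1) by blast
qed

text \<open>The sampling map need not be shown measurable: \<open>distr\<close> assigns to a set either the
  measure of its preimage or \<open>0\<close>, and both vanish here.\<close>

lemma null_irregular_configs: "irregular_configs \<in> null_sets (poisson_P0 T)"
proof -
  interpret uniform: prob_space uniform_points
    by (intro prob_space_PiM prob_space_uniform)
  let ?M = "measure_pmf (poisson_pmf T) \<Otimes>\<^sub>M uniform_points"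
  let ?f = "\<lambda>(N::nat, x::nat \<Rightarrow> real). x ` {..<N}"
  define Q where "Q = (\<Union>N. {N} \<times> (\<Union>i<N. irregular_coordinate i))"
  have Q: "Q \<in> null_sets ?M"
    unfolding Q_def using null_irregular_coordinate
    by (intro null_sets_UN uniform.times_in_null_sets2 null_sets_UN') auto
  moreover have "?f -` irregular_configs \<inter> space ?M \<subseteq> Q"
    using irregular_coordinate_if_irregular_config by (fastforce simp: Q_def space_pair_measure)
  ultimately have "emeasure ?M (?f -` irregular_configs \<inter> space ?M) = 0"
    by (metis emeasure_mono le_zero_eq null_setsD1 null_setsD2)
  then have "emeasure (poisson_P0 T) irregular_configs = 0"
    unfolding poisson_P0_def distr_def emeasure_measure_of_conv by simp
  then show ?thesis
    using sets_irregular_configs by (simp add: null_sets_def poisson_P0_def)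
qed

lemma AE_good_configuration: "AE \<phi> in poisson_P0 T. good_configuration T k a b lam \<phi>"
  using null_irregular_configs
proof (rule AE_I')
  show "{\<phi> \<in> space (poisson_P0 T). \<not> good_configuration T k a b lam \<phi>} \<subseteq> irregular_configs"
    using good_configuration_if_regular by (auto simp: poisson_P0_def)
qed

end

theorem proposition4p1:
  fixes T :: real and lam :: "real \<Rightarrow> real list \<Rightarrow> real"
    and k :: "nat \<Rightarrow> nat" and a b :: "nat \<Rightarrow> nat \<Rightarrow> real"
  assumes "T > 0"
    and "conditional_intensity T lam"
    and "dissecting T k a b"
  shows "AE \<phi> in poisson_P0 T.
           ((\<lambda>n. S_int (k n) (a n) (b n) (\<lambda>i. p_int lam \<phi> (a n i) (b n i)) \<phi>
                 + ereal (\<Sum>i<k n. if card (\<phi> \<inter> {a n i<..b n i}) > 0 then ln (b n i - a n i) else 0))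
            \<longlonglongrightarrow> S_ll T lam \<phi>)"
proof -
  interpret dissecting_intensity T k a b lam
    using assms by unfold_locales
  show ?thesis
    using AE_good_configuration
  proof eventually_elim
    case (elim \<phi>)
    show ?case
      using good_configuration.normalized_interval_score_tendsto[OF elim]
      unfolding good_configuration.normalized_interval_score_def[OF elim, abs_def] .
  qed
qed

end
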